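(* Let $(F,v)$ be a valued field and $\varepsilon\in\Gamma$ with $0\le\varepsilon<v(2)$. Then $W_q(F)_\varepsilon$ is the subgroup of $W_q(F)$ generated by the Witt classes of the quadratic forms $[a,b]$ with $a,b\in F$ and $v(a)+v(b)\ge-2\varepsilon$. (Each such form is nonsingular.)
   Context: $F$ is a field with valuation $v\colon F\to\Gamma\cup\{\infty\}$, $\Gamma$ divisible totally ordered abelian group; $v(2)=\infty$ iff $\operatorname{char}F=2$. For $a,b\in F$, $[a,b]$ denotes the quadratic form on $F^2$ given by $(x_1,x_2)\mapsto ax_1^2+x_1x_2+bx_2^2$. $W_q(F)$ is the Witt group of nonsingular quadratic forms (polar form nondegenerate). A $v$-norm on a finite-dimensional $F$-space $V$ is $\alpha\colon V\to\Gamma\cup\{\infty\}$ with $\alpha(x)=\infty\iff x=0$, $\alpha(\lambda x)=v(\lambda)+\alpha(x)$, $\alpha(x+y)\ge\min(\alpha(x),\alpha(y))$, admitting a basis $(e_i)$ with $\alpha(\sum\lambda_ie_i)=\min\alpha(\lambda_ie_i)$. For $\varepsilon\ge0$, $\alpha$ is compatible of depth $\varepsilon$ with a quadratic form $q$ with polar form $b_q$ if (a) $v(b_q(x,y))\ge\alpha(x)+\alpha(y)+\varepsilon$; (b) $v(q(x))\ge2\alpha(x)$; (c) for every $x\neq0$ there is $y\neq0$ with $v(b_q(x,y))=\alpha(x)+\alpha(y)+\varepsilon$. $W_q(F)_\varepsilon$ is the set of Witt classes represented by a nonsingular quadratic space admitting a compatible $v$-norm of some depth $\gamma\le\varepsilon$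 (this is a subgroup). *)

theory Defs
  imports Main
begin

text \<open>A valuation on the field 'a with values in the totally ordered
abelian group 'g is a map v :: 'a => 'g that is only meaningful on nonzero elements;
the value v 0 = infinity is encoded by always guarding with "x = 0".
Finite-dimensional quadratic spaces are represented in coordinates: a pair (n, Q)
where Q is a quadratic form on the coordinate space F^n, realised as the set of
functions nat => 'a vanishing outside {..<n}.\<close>

definition valuation :: "('a::field \<Rightarrow> 'g::linordered_ab_group_add) \<Rightarrow> bool" where
  "valuation v \<longleftrightarrow>
     (\<forall>x y. x \<noteq> 0 \<and> y \<noteq> 0 \<longrightarrow> v (x * y) = v x + v y) \<and>
     (\<forall>x y. x \<noteq> 0 \<and> y \<noteq> 0 \<and> x + y \<noteq> 0 \<longrightarrow> min (v x) (v y) \<le> v (x + y))"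

definition divisible_group :: "'g::linordered_ab_group_add set \<Rightarrow> bool" where
  "divisible_group G \<longleftrightarrow> (\<forall>g\<in>G. \<forall>n::nat. n > 0 \<longrightarrow> (\<exists>h\<in>G. (\<Sum>i<n. h) = g))"

type_synonym 'a qspace = "nat \<times> ((nat \<Rightarrow> 'a) \<Rightarrow> 'a)"

definition vecs :: "nat \<Rightarrow> (nat \<Rightarrow> 'a::zero) set" where
  "vecs n = {x. \<forall>i\<ge>n. x i = 0}"

definition vadd :: "(nat \<Rightarrow> 'a::field) \<Rightarrow> (nat \<Rightarrow> 'a) \<Rightarrow> nat \<Rightarrow> 'a" where
  "vadd x y = (\<lambda>i. x i + y i)"

definition vscale :: "'a::field \<Rightarrow> (nat \<Rightarrow> 'a) \<Rightarrow> nat \<Rightarrow> 'a" where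
  "vscale c x = (\<lambda>i. c * x i)"

definition polar :: "((nat \<Rightarrow> 'a::field) \<Rightarrow> 'a) \<Rightarrow> (nat \<Rightarrow> 'a) \<Rightarrow> (nat \<Rightarrow> 'a) \<Rightarrow> 'a" where
  "polar Q x y = Q (vadd x y) - Q x - Q y"

definition is_qform :: "'a::field qspace \<Rightarrow> bool" where
  "is_qform S \<longleftrightarrow> (case S of (n, Q) \<Rightarrow>
     (\<forall>x\<in>vecs n. \<forall>c. Q (vscale c x) = c^2 * Q x) \<and>
     (\<forall>x\<in>vecs n. \<forall>y\<in>vecs n. \<forall>z\<in>vecs n.
        polar Q (vadd x y) z = polar Q x z + polar Q y z) \<and>
     (\<forall>x\<in>vecs n. \<forall>y\<in>vecs n. \<forall>c. polar Q (vscale c x) y = c * polar Q x y))"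

definition nonsingular :: "'a::field qspace \<Rightarrow> bool" where
  "nonsingular S \<longleftrightarrow> is_qform S \<and> (case S of (n, Q) \<Rightarrow>
     (\<forall>x\<in>vecs n. (\<forall>y\<in>vecs n. polar Q x y = 0) \<longrightarrow> x = (\<lambda>_. 0)))"

definition isometric :: "'a::field qspace \<Rightarrow> 'a qspace \<Rightarrow> bool" where
  "isometric S T \<longleftrightarrow> (case S of (n, Q) \<Rightarrow> case T of (m, R) \<Rightarrow>
     (\<exists>f. bij_betw f (vecs n) (vecs m) \<and>
          (\<forall>x\<in>vecs n. \<forall>y\<in>vecs n. f (vadd x y) = vadd (f x) (f y)) \<and>
          (\<forall>x\<in>vecs n. \<forall>c. f (vscale c x) = vscale c (f x)) \<and>
          (\<forall>x\<in>vecs n. R (f x) = Q x)))"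

definition osum :: "'a::field qspace \<Rightarrow> 'a qspace \<Rightarrow> 'a qspace" where
  "osum S T = (case S of (n, Q) \<Rightarrow> case T of (m, R) \<Rightarrow>
     (n + m, \<lambda>x. Q (\<lambda>i. if i < n then x i else 0) + R (\<lambda>i. if i < m then x (n + i) else 0)))"

definition hyp :: "nat \<Rightarrow> 'a::field qspace" where
  "hyp k = (2 * k, \<lambda>x. \<Sum>i<k. x (2 * i) * x (2 * i + 1))"

definition witt_equiv :: "'a::field qspace \<Rightarrow> 'a qspace \<Rightarrow> bool" where
  "witt_equiv S T \<longleftrightarrow> (\<exists>k l. isometric (osum S (hyp k)) (osum T (hyp l)))"

definition binf :: "'a::field \<Rightarrow> 'a \<Rightarrow> 'a qspace" where
  "binf a b = (2, \<lambda>x. a * (x 0)^2 + x 0 * x 1 + b * (x 1)^2)"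

definition zero_space :: "'a::field qspace" where
  "zero_space = (0, \<lambda>_. 0)"

fun sum_binf :: "('a::field \<times> 'a) list \<Rightarrow> 'a qspace" where
  "sum_binf [] = zero_space"
| "sum_binf ((a, b) # ps) = osum (binf a b) (sum_binf ps)"

text \<open>v-norm on F^n (alpha is only meaningful on nonzero vectors; alpha 0 = infinity).
The splitting basis e is encoded by bijectivity of the coordinate map.\<close>
definition vnorm :: "('a::field \<Rightarrow> 'g::linordered_ab_group_add) \<Rightarrow> nat \<Rightarrow> ((nat \<Rightarrow> 'a) \<Rightarrow> 'g) \<Rightarrow> bool" where
  "vnorm v n \<alpha> \<longleftrightarrow>
     (\<forall>c. \<forall>x\<in>vecs n. c \<noteq> 0 \<and> x \<noteq> (\<lambda>_. 0) \<longrightarrow> \<alpha> (vscale c x) = v c + \<alpha> x) \<and>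
     (\<forall>x\<in>vecs n. \<forall>y\<in>vecs n. x \<noteq> (\<lambda>_. 0) \<and> y \<noteq> (\<lambda>_. 0) \<and> vadd x y \<noteq> (\<lambda>_. 0)
        \<longrightarrow> min (\<alpha> x) (\<alpha> y) \<le> \<alpha> (vadd x y)) \<and>
     (\<exists>e :: nat \<Rightarrow> nat \<Rightarrow> 'a.
        (\<forall>i<n. e i \<in> vecs n) \<and>
        bij_betw (\<lambda>c. \<lambda>j. \<Sum>i<n. c i * e i j) (vecs n) (vecs n) \<and>
        (\<forall>c\<in>vecs n. c \<noteq> (\<lambda>_. 0) \<longrightarrow>
           \<alpha> (\<lambda>j. \<Sum>i<n. c i * e i j) = Min {v (c i) + \<alpha> (e i) | i. i < n \<and> c i \<noteq> 0}))"

definition compatible :: "('a::field \<Rightarrow> 'g::linordered_ab_group_add) \<Rightarrow> 'a qspace \<Rightarrow> ((nat \<Rightarrow> 'a) \<Rightarrow> 'g) \<Rightarrow> 'g \<Rightarrow> bool" where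
  "compatible v S \<alpha> \<gamma> \<longleftrightarrow> 0 \<le> \<gamma> \<and> (case S of (n, Q) \<Rightarrow>
     vnorm v n \<alpha> \<and>
     (\<forall>x\<in>vecs n. \<forall>y\<in>vecs n. x \<noteq> (\<lambda>_. 0) \<and> y \<noteq> (\<lambda>_. 0) \<and> polar Q x y \<noteq> 0
        \<longrightarrow> \<alpha> x + \<alpha> y + \<gamma> \<le> v (polar Q x y)) \<and>
     (\<forall>x\<in>vecs n. x \<noteq> (\<lambda>_. 0) \<and> Q x \<noteq> 0 \<longrightarrow> \<alpha> x + \<alpha> x \<le> v (Q x)) \<and>
     (\<forall>x\<in>vecs n. x \<noteq> (\<lambda>_. 0) \<longrightarrow>
        (\<exists>y\<in>vecs n. y \<noteq> (\<lambda>_. 0) \<and> polar Q x y \<noteq> 0 \<and> v (polar Q x y) = \<alpha> x + \<alpha> y + \<gamma>)))"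

definition in_W_eps :: "('a::field \<Rightarrow> 'g::linordered_ab_group_add) \<Rightarrow> 'g \<Rightarrow> 'a qspace \<Rightarrow> bool" where
  "in_W_eps v \<epsilon> S \<longleftrightarrow> (\<exists>T \<alpha> \<gamma>. nonsingular T \<and> witt_equiv S T \<and> \<gamma> \<le> \<epsilon> \<and> compatible v T \<alpha> \<gamma>)"

definition gen_cond :: "('a::field \<Rightarrow> 'g::linordered_ab_group_add) \<Rightarrow> 'g \<Rightarrow> 'a \<Rightarrow> 'a \<Rightarrow> bool" where
  "gen_cond v \<epsilon> a b \<longleftrightarrow> a = 0 \<or> b = 0 \<or> - (\<epsilon> + \<epsilon>) \<le> v a + v b"

text \<open>The Witt class of S lies in the subgroup generated by the classes of the
[a,b] with gen_cond: [S] = sum over P minus sum over N, i.e. S + sum N ~ sum P.\<close>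
definition in_generated :: "('a::field \<Rightarrow> 'g::linordered_ab_group_add) \<Rightarrow> 'g \<Rightarrow> 'a qspace \<Rightarrow> bool" where
  "in_generated v \<epsilon> S \<longleftrightarrow> (\<exists>P N. (\<forall>(a, b)\<in>set P. gen_cond v \<epsilon> a b) \<and> (\<forall>(a, b)\<in>set N. gen_cond v \<epsilon> a b) \<and>
      witt_equiv (osum S (sum_binf N)) (sum_binf P))"

end

theory Submission
  imports Defs
begin

text \<open>
  One inclusion: a generator [a,b] with v a + v b \<ge> -2\<epsilon> carries the coordinate v-norm with
  weights w0, w1 = -\<epsilon> - w0, where 2 w0 \<le> v a and 2 w1 \<le> v b (divisibility of \<Gamma>); since
  v 2 > \<epsilon> the polar form attains the depth \<epsilon> on the basis pair, so this norm is compatible.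
  The same holds for orthogonal sums, and a negative generator -[a,b] is replaced by [-a,-b]
  using that [a,b] \<perpendicular> [-a,-b] is hyperbolic.

  Conversely, take a compatible norm of depth \<gamma> \<le> \<epsilon> with a splitting basis. Condition (c)
  yields for any basis vector x a basis vector y with v(b(x,y)) = \<alpha> x + \<alpha> y + \<gamma>. Scaled to
  b(x,y) = 1 they span a binary form [Q x, Q y] satisfying the generator condition, whose Gram
  determinant 4 Q(x) Q(y) - 1 is a unit. Hence the projections of the other basis vectors to
  the orthogonal complement still form a splitting basis on which the depth is attained, and
  induction splits the space into generators.
\<close>

lemma val_mult: "valuation v \<Longrightarrow> x \<noteq> 0 \<Longrightarrow> y \<noteq> 0 \<Longrightarrow> v (x * y) = v x + v y"
  unfolding valuation_def by blast

lemma val_add_min: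
  "valuation v \<Longrightarrow> x \<noteq> 0 \<Longrightarrow> y \<noteq> 0 \<Longrightarrow> x + y \<noteq> 0 \<Longrightarrow> min (v x) (v y) \<le> v (x + y)"
  unfolding valuation_def by blast

lemma val_one: "valuation v \<Longrightarrow> v 1 = 0"
  using val_mult[of v 1 1] by simp

lemma val_neg: assumes "valuation v" shows "v (- x) = v x"
proof (cases "x = 0")
  case False
  have "v (-1) + v (-1) = 0"
    using val_mult[OF assms, of "-1" "-1"] val_one[OF assms] by simp
  then have "v (-1) = 0"
    by (metis add.right_neutral add_less_cancel_left add_pos_pos less_add_same_cancel1
        linorder_neqE not_less_iff_gr_or_eq add_neg_neg)
  then show ?thesis using val_mult[OF assms, of "-1" x] False by simp
qed simp

lemma val_inverse: "valuation v \<Longrightarrow> x \<noteq> 0 \<Longrightarrow> v (inverse x) = - v x"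
  using val_mult[of v x "inverse x"] val_one[of v] by (simp add: eq_neg_iff_add_eq_0 add.commute)

lemma val_add_ge:
  assumes "valuation v" "x + y \<noteq> 0" "x \<noteq> 0 \<Longrightarrow> l \<le> v x" "y \<noteq> 0 \<Longrightarrow> l \<le> v y"
  shows "l \<le> v (x + y)"
proof (cases "x = 0 \<or> y = 0")
  case False
  then have "min (v x) (v y) \<le> v (x + y)" using val_add_min[OF assms(1)] assms(2) by blast
  then show ?thesis using False assms(3,4) by (meson min.bounded_iff order_trans)
qed (use assms in auto)

lemma val_sum_witness:
  assumes "valuation v" "finite I" "sum f I \<noteq> 0"
  shows "\<exists>i\<in>I. f i \<noteq> 0 \<and> v (f i) \<le> v (sum f I)"
  using assms(2,3)
proof (induction I rule: finite_induct)
  case (insert a F)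
  have s: "sum f (insert a F) = f a + sum f F" using insert by simp
  show ?case
  proof (cases "sum f F = 0 \<or> f a = 0")
    case True then show ?thesis using s insert by auto
  next
    case False
    then have "min (v (f a)) (v (sum f F)) \<le> v (sum f (insert a F))"
      using val_add_min[OF assms(1)] s insert.prems by simp
    then consider "v (f a) \<le> v (sum f (insert a F))" | "v (sum f F) \<le> v (sum f (insert a F))"
      by linarith
    then show ?thesis
    proof cases
      case 2
      then show ?thesis using insert.IH False by (meson insertCI order_trans)
    qed (use False in auto)
  qed
qed simp

lemma val_sum_ge:
  assumes "valuation v" "finite I" "sum f I \<noteq> 0" "\<And>i. i \<in> I \<Longrightarrow> f i \<noteq> 0 \<Longrightarrow> l \<le> v (f i)"
  shows "l \<le> v (sum f I)"
  using val_sum_witness[OF assms(1-3)] assms(4) by (meson order_trans)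

lemma val_sum_gt:
  assumes "valuation v" "finite I" "sum f I \<noteq> 0" "\<And>i. i \<in> I \<Longrightarrow> f i \<noteq> 0 \<Longrightarrow> l < v (f i)"
  shows "l < v (sum f I)"
  using val_sum_witness[OF assms(1-3)] assms(4) by (meson order_less_le_trans)

lemma val_diff_dominant:
  assumes "valuation v" "a \<noteq> 0" "u \<noteq> 0 \<Longrightarrow> v a < v u"
  shows "a - u \<noteq> 0 \<and> v (a - u) = v a"
proof (cases "u = 0")
  case False
  have ne: "a - u \<noteq> 0" using assms False by auto
  have "min (v a) (v (- u)) \<le> v (a + - u)" using val_add_min[OF assms(1,2), of "- u"] False ne by simp
  then have "v a \<le> v (a - u)" using val_neg[OF assms(1), of u] assms(3)[OF False] by simp
  moreover have "min (v (a - u)) (v u) \<le> v ((a - u) + u)"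
    using val_add_min[OF assms(1) ne False] assms(2) by simp
  then have "v (a - u) \<le> v a" using assms(3)[OF False] by (simp add: min_def split: if_splits)
  ultimately show ?thesis using ne by simp
qed (use assms in simp)

lemma val_sub_one:
  assumes "valuation v" "u \<noteq> 0 \<Longrightarrow> 0 < v u"
  shows "u - 1 \<noteq> 0 \<and> v (u - 1) = 0"
proof -
  have "1 - u \<noteq> 0 \<and> v (1 - u) = v 1"
    by (rule val_diff_dominant[OF assms(1)]) (use assms val_one[OF assms(1)] in auto)
  then show ?thesis using val_neg[OF assms(1), of "1 - u"] val_one[OF assms(1)] by simp
qed

text \<open>In an abstract ordered group linarith is not available; these lemmas reduce a linear
  inequality to a sum of known nonnegative gaps and a group identity checked by simp.\<close>

lemma le_by_gaps1:
  fixes A :: "'g::linordered_ab_group_add"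
  assumes "a1 \<le> b1" "b1 - a1 = B - A" shows "A \<le> B"
proof -
  have "0 \<le> b1 - a1" using assms(1) by simp
  then show ?thesis using assms(2) by simp
qed

lemma le_by_gaps2:
  fixes A :: "'g::linordered_ab_group_add"
  assumes "a1 \<le> b1" "a2 \<le> b2" "(b1 - a1) + (b2 - a2) = B - A" shows "A \<le> B"
proof -
  have "0 \<le> (b1 - a1) + (b2 - a2)" using assms(1,2) by (simp add: add_nonneg_nonneg)
  then show ?thesis using assms(3) by simp
qed

lemma less_by_gaps2:
  fixes A :: "'g::linordered_ab_group_add"
  assumes "a1 < b1" "a2 \<le> b2" "(b1 - a1) + (b2 - a2) = B - A" shows "A < B"
proof -
  have "0 < (b1 - a1) + (b2 - a2)" using assms(1,2) by (simp add: add_pos_nonneg)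
  then show ?thesis using assms(3) by simp
qed

lemma less_by_gaps3:
  fixes A :: "'g::linordered_ab_group_add"
  assumes "a1 < b1" "a2 \<le> b2" "a3 \<le> b3" "(b1 - a1) + (b2 - a2) + (b3 - a3) = B - A" shows "A < B"
proof -
  have "0 < (b1 - a1) + (b2 - a2) + (b3 - a3)" using assms(1,2,3) by (simp add: add_pos_nonneg)
  then show ?thesis using assms(4) by simp
qed

text \<open>val_ge v l z means l \<le> v z, with the convention v 0 = \<infinity>.\<close>
definition val_ge :: "('a::field \<Rightarrow> 'g::linordered_ab_group_add) \<Rightarrow> 'g \<Rightarrow> 'a \<Rightarrow> bool" where
  "val_ge v l z \<longleftrightarrow> (z \<noteq> 0 \<longrightarrow> l \<le> v z)"

lemma val_ge_add: "valuation v \<Longrightarrow> val_ge v l x \<Longrightarrow> val_ge v l y \<Longrightarrow> val_ge v l (x + y)"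
  unfolding val_ge_def using val_add_ge by blast

lemma val_ge_sum:
  assumes "valuation v" "finite I" "\<And>i. i \<in> I \<Longrightarrow> val_ge v l (f i)" shows "val_ge v l (sum f I)"
  using val_sum_ge[OF assms(1,2)] assms(3) unfolding val_ge_def by blast

lemma val_ge_mult: "valuation v \<Longrightarrow> val_ge v lx x \<Longrightarrow> val_ge v ly y \<Longrightarrow> val_ge v (lx + ly) (x * y)"
  unfolding val_ge_def using val_mult by (metis add_mono mult_eq_0_iff)

lemma val_ge_mono: "l' \<le> l \<Longrightarrow> val_ge v l z \<Longrightarrow> val_ge v l' z"
  unfolding val_ge_def by auto

lemma val_ge_neg: "valuation v \<Longrightarrow> val_ge v l z \<Longrightarrow> val_ge v l (- z)"
  unfolding val_ge_def using val_neg[of v z] by auto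

lemma val_ge_inverse: "valuation v \<Longrightarrow> v d = 0 \<Longrightarrow> val_ge v 0 (inverse d)"
  unfolding val_ge_def using val_inverse by fastforce

lemma vadd_vecs[intro]: "x \<in> vecs n \<Longrightarrow> y \<in> vecs n \<Longrightarrow> vadd x y \<in> vecs n"
  by (simp add: vecs_def vadd_def)

lemma vscale_vecs[intro]: "x \<in> vecs n \<Longrightarrow> vscale c x \<in> vecs n"
  by (simp add: vecs_def vscale_def)

lemma zero_vecs[intro]: "(\<lambda>_. 0) \<in> vecs n"
  by (simp add: vecs_def)

definition restr :: "nat \<Rightarrow> (nat \<Rightarrow> 'a::zero) \<Rightarrow> nat \<Rightarrow> 'a" where
  "restr n x = (\<lambda>i. if i < n then x i else 0)"

lemma restr_vecs[intro]: "restr n x \<in> vecs n"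
  by (simp add: restr_def vecs_def)

lemma restr_id: "x \<in> vecs n \<Longrightarrow> restr n x = x"
  by (auto simp: restr_def vecs_def)

lemma restr_vadd: "restr n (vadd x y) = vadd (restr n x) (restr n y)"
  by (auto simp: restr_def vadd_def)

lemma restr_vscale: "restr n (vscale c x) = vscale c (restr n x)"
  by (auto simp: restr_def vscale_def)

lemma osum_pair: "osum (n, Q) (m, R) = (n + m, \<lambda>x. Q (restr n x) + R (restr m (\<lambda>i. x (n + i))))"
  by (simp add: osum_def restr_def)

lemma osum_assoc: "osum (osum A B) C = osum A (osum B C)"
proof -
  obtain n Q m R k P where "A = (n, Q)" "B = (m, R)" "C = (k, P)" by (metis prod.exhaust)
  then show ?thesis
    by (simp add: osum_pair restr_def add.assoc if_distrib[of "\<lambda>x. if _ then x else 0"] cong: if_cong)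
qed

lemma isometric_pair_iff: "isometric (n, Q) (m, R) \<longleftrightarrow>
   (\<exists>f. bij_betw f (vecs n) (vecs m) \<and>
          (\<forall>x\<in>vecs n. \<forall>y\<in>vecs n. f (vadd x y) = vadd (f x) (f y)) \<and>
          (\<forall>x\<in>vecs n. \<forall>c. f (vscale c x) = vscale c (f x)) \<and>
          (\<forall>x\<in>vecs n. R (f x) = Q x))"
  by (simp add: isometric_def)

lemma isometric_refl: "isometric S S"
  by (cases S) (auto simp: isometric_pair_iff intro!: exI[of _ id])

lemma isometric_trans [trans]: assumes "isometric S T" "isometric T U" shows "isometric S U"
proof -
  obtain n Q m R k P where S: "S = (n, Q)" and T: "T = (m, R)" and U: "U = (k, P)"
    by (metis prod.exhaust)
  obtain f where f: "bij_betw f (vecs n) (vecs m)" "\<forall>x\<in>vecs n. \<forall>y\<in>vecs n. f (vadd x y) = vadd (f x) (f y)"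
     "\<forall>x\<in>vecs n. \<forall>c. f (vscale c x) = vscale c (f x)" "\<forall>x\<in>vecs n. R (f x) = Q x"
    using assms(1) unfolding S T isometric_pair_iff by blast
  obtain g where g: "bij_betw g (vecs m) (vecs k)" "\<forall>x\<in>vecs m. \<forall>y\<in>vecs m. g (vadd x y) = vadd (g x) (g y)"
     "\<forall>x\<in>vecs m. \<forall>c. g (vscale c x) = vscale c (g x)" "\<forall>x\<in>vecs m. P (g x) = R x"
    using assms(2) unfolding U T isometric_pair_iff by blast
  have "\<And>x. x \<in> vecs n \<Longrightarrow> f x \<in> vecs m" using f(1) bij_betwE by blast
  then show ?thesis unfolding S U isometric_pair_iff
    using f g bij_betw_trans[OF f(1) g(1)] by (intro exI[of _ "g \<circ> f"]) auto
qed

lemma isometric_inverse: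
  assumes "isometric (n, Q) (m, R)"
  obtains f g where "\<And>x. x \<in> vecs n \<Longrightarrow> f x \<in> vecs m" "\<And>y. y \<in> vecs m \<Longrightarrow> g y \<in> vecs n"
    "\<And>x. x \<in> vecs n \<Longrightarrow> g (f x) = x" "\<And>y. y \<in> vecs m \<Longrightarrow> f (g y) = y"
    "\<forall>x\<in>vecs n. \<forall>y\<in>vecs n. f (vadd x y) = vadd (f x) (f y)"
    "\<forall>x\<in>vecs n. \<forall>c. f (vscale c x) = vscale c (f x)" "\<forall>x\<in>vecs n. R (f x) = Q x"
proof -
  obtain f where f: "bij_betw f (vecs n) (vecs m)" "\<forall>x\<in>vecs n. \<forall>y\<in>vecs n. f (vadd x y) = vadd (f x) (f y)"
     "\<forall>x\<in>vecs n. \<forall>c. f (vscale c x) = vscale c (f x)" "\<forall>x\<in>vecs n. R (f x) = Q x"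
    using assms unfolding isometric_pair_iff by blast
  show thesis
  proof (rule that[of f "inv_into (vecs n) f"])
    show "\<And>x. x \<in> vecs n \<Longrightarrow> f x \<in> vecs m" using f(1) bij_betwE by blast
    show "\<And>y. y \<in> vecs m \<Longrightarrow> inv_into (vecs n) f y \<in> vecs n"
      using bij_betw_inv_into[OF f(1)] bij_betwE by blast
    show "\<And>x. x \<in> vecs n \<Longrightarrow> inv_into (vecs n) f (f x) = x"
      using bij_betw_inv_into_left[OF f(1)] .
    show "\<And>y. y \<in> vecs m \<Longrightarrow> f (inv_into (vecs n) f y) = y"
      using bij_betw_inv_into_right[OF f(1)] .
  qed (use f in auto)
qed

lemma isometric_sym: assumes "isometric S T" shows "isometric T S"
proof -
  obtain n Q m R where S: "S = (n, Q)" and T: "T = (m, R)" by (metis prod.exhaust)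
  obtain f g where fg: "\<And>x. x \<in> vecs n \<Longrightarrow> f x \<in> vecs m" "\<And>y. y \<in> vecs m \<Longrightarrow> g y \<in> vecs n"
    "\<And>x. x \<in> vecs n \<Longrightarrow> g (f x) = x" "\<And>y. y \<in> vecs m \<Longrightarrow> f (g y) = y"
    and f: "\<forall>x\<in>vecs n. \<forall>y\<in>vecs n. f (vadd x y) = vadd (f x) (f y)"
    "\<forall>x\<in>vecs n. \<forall>c. f (vscale c x) = vscale c (f x)" "\<forall>x\<in>vecs n. R (f x) = Q x"
    by (rule isometric_inverse[OF assms[unfolded S T]]) (rule that)
  have "g (vadd x y) = vadd (g x) (g y)" if "x \<in> vecs m" "y \<in> vecs m" for x y
  proof -
    have "f (vadd (g x) (g y)) = vadd x y" using f(1) fg(2,4) that by simp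
    then show ?thesis using fg(3)[of "vadd (g x) (g y)"] fg(2) that by auto
  qed
  moreover have "g (vscale c x) = vscale c (g x)" if "x \<in> vecs m" for x c
  proof -
    have "f (vscale c (g x)) = vscale c x" using f(2) fg(2,4) that by simp
    then show ?thesis using fg(3)[of "vscale c (g x)"] fg(2) that by auto
  qed
  moreover have "bij_betw g (vecs m) (vecs n)"
    by (rule bij_betw_byWitness[where f' = f]) (use fg in auto)
  moreover have "Q (g y) = R y" if "y \<in> vecs m" for y
    using f(3) fg(2,4) that by metis
  ultimately show ?thesis unfolding S T isometric_pair_iff by (intro exI[of _ g]) auto
qed

lemma isometric_osum_left: assumes "isometric X Y" shows "isometric (osum X Z) (osum Y Z)"
proof -
  obtain n Q m R k P where X: "X = (n, Q)" and Y: "Y = (m, R)" and Z: "Z = (k, P)"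
    by (metis prod.exhaust)
  obtain f g where fg: "\<And>x. x \<in> vecs n \<Longrightarrow> f x \<in> vecs m" "\<And>y. y \<in> vecs m \<Longrightarrow> g y \<in> vecs n"
    "\<And>x. x \<in> vecs n \<Longrightarrow> g (f x) = x" "\<And>y. y \<in> vecs m \<Longrightarrow> f (g y) = y"
    and f: "\<forall>x\<in>vecs n. \<forall>y\<in>vecs n. f (vadd x y) = vadd (f x) (f y)"
    "\<forall>x\<in>vecs n. \<forall>c. f (vscale c x) = vscale c (f x)" "\<forall>x\<in>vecs n. R (f x) = Q x"
    by (rule isometric_inverse[OF assms[unfolded X Y]]) (rule that)
  define F where "F x = (\<lambda>i. if i < m then f (restr n x) i
      else if i < m + k then x (n + (i - m)) else 0)" for x
  define G where "G y = (\<lambda>i. if i < n then g (restr m y) i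
      else if i < n + k then y (m + (i - n)) else 0)" for y
  have rF: "restr m (F x) = f (restr n x)" for x
    using fg(1)[OF restr_vecs[of n x]] by (auto simp: F_def restr_def fun_eq_iff vecs_def)
  have rG: "restr n (G y) = g (restr m y)" for y
    using fg(2)[OF restr_vecs[of m y]] by (auto simp: G_def restr_def fun_eq_iff vecs_def)
  have GF: "G (F x) = x" if "x \<in> vecs (n + k)" for x
  proof (rule ext)
    fix i
    have "G (F x) i = (if i < n then g (f (restr n x)) i else if i < n + k then F x (m + (i - n)) else 0)"
      by (simp add: G_def rF)
    moreover have "g (f (restr n x)) = restr n x" using fg(3) by blast
    ultimately show "G (F x) i = x i" using that by (auto simp: restr_def vecs_def F_def)
  qed
  have FG: "F (G y) = y" if "y \<in> vecs (m + k)" for y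
  proof (rule ext)
    fix i
    have "F (G y) i = (if i < m then f (g (restr m y)) i else if i < m + k then G y (n + (i - m)) else 0)"
      by (simp add: F_def rG)
    moreover have "f (g (restr m y)) = restr m y" using fg(4) by blast
    ultimately show "F (G y) i = y i" using that by (auto simp: restr_def vecs_def G_def)
  qed
  have "F x \<in> vecs (m + k)" "G y \<in> vecs (n + k)" for x y
    by (auto simp: F_def G_def vecs_def)
  with GF FG have bij: "bij_betw F (vecs (n + k)) (vecs (m + k))"
    by (intro bij_betw_byWitness[where f' = G]) auto
  have "F (vadd x y) = vadd (F x) (F y)" for x y
    using f(1) by (auto simp: F_def restr_vadd fun_eq_iff) (auto simp: vadd_def)
  moreover have "F (vscale c x) = vscale c (F x)" for x c
    using f(2) by (auto simp: F_def restr_vscale fun_eq_iff) (auto simp: vscale_def)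
  moreover have "restr k (\<lambda>i. F x (m + i)) = restr k (\<lambda>i. x (n + i))" for x
    by (auto simp: restr_def F_def fun_eq_iff)
  ultimately show ?thesis unfolding X Y Z osum_pair isometric_pair_iff
    using bij f(3) rF by (intro exI[of _ F]) auto
qed

lemma isometric_osum_commute: "isometric (osum X Y) (osum Y X)"
proof -
  obtain n Q where X: "X = (n,Q)" by (cases X)
  obtain m R where Y: "Y = (m,R)" by (cases Y)
  define F where "F x = (\<lambda>i. if i < m then x (n + i) else if i < m + n then x (i - m) else 0)"
    for x :: "nat \<Rightarrow> 'a"
  define G where "G y = (\<lambda>i. if i < n then y (m + i) else if i < n + m then y (i - n) else 0)"
    for y :: "nat \<Rightarrow> 'a"
  have Fv: "F x \<in> vecs (m+n)" for x by (auto simp: F_def vecs_def)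
  have Gv: "G y \<in> vecs (n+m)" for y by (auto simp: G_def vecs_def)
  have GF: "G (F x) = x" if "x \<in> vecs (n+m)" for x
    using that by (auto simp: G_def F_def vecs_def fun_eq_iff)
  have FG: "F (G x) = x" if "x \<in> vecs (m+n)" for x
    using that by (auto simp: G_def F_def vecs_def fun_eq_iff)
  have bij: "bij_betw F (vecs (n+m)) (vecs (m+n))"
    by (rule bij_betw_byWitness[where f'=G]) (use GF FG Fv Gv in auto)
  have 1: "restr m (F x) = restr m (\<lambda>i. x (n + i))" for x by (auto simp: F_def restr_def fun_eq_iff)
  have 2: "restr n (\<lambda>i. F x (m + i)) = restr n x" for x by (auto simp: F_def restr_def fun_eq_iff)
  have Qp: "\<forall>x\<in>vecs (n+m).
      R (restr m (F x)) + Q (restr n (\<lambda>i. F x (m + i))) = Q (restr n x) + R (restr m (\<lambda>i. x (n + i)))"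
    unfolding 1 2 by (simp add: add.commute)
  have add: "\<forall>x\<in>vecs (n+m). \<forall>y\<in>vecs (n+m). F (vadd x y) = vadd (F x) (F y)"
    by (auto simp: F_def vadd_def fun_eq_iff)
  have sc: "\<forall>x\<in>vecs (n+m). \<forall>c. F (vscale c x) = vscale c (F x)"
    by (auto simp: F_def vscale_def fun_eq_iff)
  show ?thesis unfolding X Y osum_pair isometric_pair_iff
    apply (intro exI[of _ F])
    using bij Qp add sc by (simp add: add.commute)
qed

lemma isometric_osum_right: assumes "isometric Y Z" shows "isometric (osum X Y) (osum X Z)"
  by (meson assms isometric_osum_commute isometric_osum_left isometric_trans)

lemma isometric_osum_zero_space: "isometric (osum X zero_space) X"
proof -
  obtain n Q where X: "X = (n,Q)" by (cases X)
  show ?thesis unfolding X osum_pair zero_space_def isometric_pair_iff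
    by (intro exI[of _ id]) (auto simp: restr_id)
qed

definition binq :: "'a::field \<Rightarrow> 'a \<Rightarrow> 'a \<Rightarrow> 'a \<Rightarrow> 'a" where
  "binq a b x y = a * x^2 + x * y + b * y^2"

definition sum_binQ :: "('a::field \<times> 'a) list \<Rightarrow> (nat \<Rightarrow> 'a) \<Rightarrow> 'a" where
  "sum_binQ L x = (\<Sum>k<length L. binq (fst (L!k)) (snd (L!k)) (x (2*k)) (x (2*k+1)))"

lemma sum_binQ_restr: "sum_binQ L (restr (2*length L) x) = sum_binQ L x"
  unfolding sum_binQ_def by (intro sum.cong) (auto simp: restr_def)

lemma sum_binf_eq_sum_binQ: "sum_binf L = (2 * length L, sum_binQ L)"
proof (induction L)
  case Nil then show ?case by (simp add: zero_space_def sum_binQ_def fun_eq_iff)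
next
  case (Cons p L)
  obtain a b where p: "p = (a,b)" by (cases p)
  have "sum_binf (p # L) = osum (binf a b) (2 * length L, sum_binQ L)" using Cons p by simp
  also have "\<dots> = (2 * length (p#L), sum_binQ (p#L))"
    unfolding binf_def osum_pair
  proof (simp add: fun_eq_iff, intro allI)
    fix x :: "nat \<Rightarrow> 'a"
    have 1: "sum_binQ L (restr (2 * length L) (\<lambda>i. x (Suc (Suc i)))) = sum_binQ L (\<lambda>i. x (Suc (Suc i)))"
      by (rule sum_binQ_restr)
    show "a * (restr 2 x 0)\<^sup>2 + restr 2 x 0 * restr 2 x (Suc 0) + b * (restr 2 x (Suc 0))\<^sup>2 +
         sum_binQ L (restr (2 * length L) (\<lambda>i. x (Suc (Suc i)))) = sum_binQ (p # L) x"
      unfolding 1 unfolding sum_binQ_def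
      by (simp add: sum.lessThan_Suc_shift p restr_def binq_def del: sum.lessThan_Suc)
  qed
  finally show ?case .
qed

lemma osum_sum_binf: "osum (sum_binf A) (sum_binf B) = sum_binf (A @ B)"
proof (induction A)
  case Nil
  show ?case unfolding sum_binf_eq_sum_binQ zero_space_def[symmetric]
    by (simp add: zero_space_def osum_pair sum_binQ_restr sum_binQ_def[of "[]"])
next
  case (Cons p A)
  obtain a b where p: "p = (a,b)" by (cases p)
  show ?case using Cons by (simp add: p osum_assoc)
qed

lemma hyp_sum_binf: "hyp k = sum_binf (replicate k (0,0))"
  by (simp add: sum_binf_eq_sum_binQ hyp_def sum_binQ_def binq_def fun_eq_iff)
definition neg_pair :: "'a::field \<times> 'a \<Rightarrow> 'a \<times> 'a" where "neg_pair p = (- fst p, - snd p)"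

text \<open>The isometry F maps the standard hyperbolic basis to two orthogonal hyperbolic pairs of
  [a,b] \<perpendicular> [-a,-b], starting with the isotropic vectors (1,0,1,0) and (-b,1,-b,0);
  G is its inverse.\<close>

lemma isometric_hyp_binf_neg:
  fixes a b :: "'a::field"
  assumes "4 * a * b - 1 \<noteq> 0"
  shows "isometric (sum_binf [(0,0),(0,0)]) (sum_binf [(a,b),(-a,-b)])"
proof -
  define D where "D = 4 * a * b - 1"
  have Dn: "D \<noteq> 0" using assms D_def by simp
  define F where "F y = (\<lambda>i::nat. if i = 0 then y 0 - b * y 1 - 2*b*y 2 - 2*a*b*y 3 / D
       else if i = 1 then y 1 + y 2 + a * y 3 / D
       else if i = 2 then y 0 - b*y 1 - 2*b*y 2 + (1-2*a*b)*y 3/D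
       else if i = 3 then - y 2 + a * y 3 / D else 0)" for y :: "nat \<Rightarrow> 'a"
  define G where "G x = (\<lambda>i::nat.
       let y3 = D*(x 2 - x 0); y2 = a*(x 2 - x 0) - x 3; y1 = x 1 + x 3 - 2*a*(x 2 - x 0);
           y0 = x 0 + b*y1 + 2*b*y2 + 2*a*b*(x 2 - x 0)
       in if i = 0 then y0 else if i = 1 then y1 else if i = 2 then y2
          else if i = 3 then y3 else 0)" for x :: "nat \<Rightarrow> 'a"
  have Fv: "F x \<in> vecs 4" for x by (auto simp: F_def vecs_def)
  have Gv: "G y \<in> vecs 4" for y by (auto simp: G_def vecs_def Let_def)
  have n4: "i \<noteq> 0 \<Longrightarrow> i \<noteq> 1 \<Longrightarrow> i \<noteq> 2 \<Longrightarrow> i \<noteq> 3 \<Longrightarrow> 4 \<le> i" for i :: nat by linarith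
  have GF: "G (F x) = x" if "x \<in> vecs 4" for x
  proof (rule ext)
    fix i :: nat
    consider "i = 0" | "i = 1" | "i = 2" | "i = 3" | "4 \<le> i" using n4 by blast
    then show "G (F x) i = x i"
      by cases (use that Dn in \<open>auto simp: G_def F_def Let_def vecs_def field_simps\<close>)
  qed
  have FG: "F (G x) = x" if "x \<in> vecs 4" for x
  proof (rule ext)
    fix i :: nat
    consider "i = 0" | "i = 1" | "i = 2" | "i = 3" | "4 \<le> i" using n4 by blast
    then show "F (G x) i = x i"
      by cases (use that Dn in \<open>auto simp: G_def F_def Let_def vecs_def field_simps\<close>)
  qed
  have bij: "bij_betw F (vecs 4) (vecs 4)"
    by (rule bij_betw_byWitness[where f'=G]) (use GF FG Fv Gv in auto)
  have Q: "sum_binQ [(a,b),(-a,-b)] (F x) = sum_binQ [(0,0),(0,0)] x" for x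
    unfolding sum_binQ_def binq_def F_def using Dn
    by (simp add: numeral_eq_Suc field_simps power2_eq_square) (simp add: D_def algebra_simps)
  have add: "\<forall>x\<in>vecs 4. \<forall>y\<in>vecs 4. F (vadd x y) = vadd (F x) (F y)"
    by (auto simp: F_def vadd_def fun_eq_iff add_divide_distrib[symmetric] algebra_simps)
  have sc: "\<forall>x\<in>vecs 4. \<forall>c. F (vscale c x) = vscale c (F x)"
    by (auto simp: F_def vscale_def fun_eq_iff algebra_simps)
  have l: "2 * length [(a,b),(-a,-b)] = 4" "2 * length [(0::'a,0::'a),(0,0)] = 4" by simp_all
  show ?thesis unfolding sum_binf_eq_sum_binQ isometric_pair_iff l
    apply (intro exI[of _ F])
    using bij Q add sc by simp
qed

abbreviation zero_pairs :: "nat \<Rightarrow> ('a::field \<times> 'a) list" where "zero_pairs k \<equiv> replicate k (0,0)"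

lemma isometric_sum_binf_append_left: "isometric (sum_binf A) (sum_binf A')
    \<Longrightarrow> isometric (sum_binf (A@B)) (sum_binf (A'@B))"
  by (metis isometric_osum_left osum_sum_binf)
lemma isometric_sum_binf_append_right: "isometric (sum_binf B) (sum_binf B')
    \<Longrightarrow> isometric (sum_binf (A@B)) (sum_binf (A@B'))"
  by (metis isometric_osum_right osum_sum_binf)
lemma isometric_sum_binf_append_swap: "isometric (sum_binf (A@B)) (sum_binf (B@A))"
  by (metis isometric_osum_commute osum_sum_binf)

lemma isometric_sum_binf_append_neg:
  assumes "\<forall>p\<in>set N. 4 * fst p * snd p - 1 \<noteq> 0"
  shows "isometric (sum_binf (N @ map neg_pair N)) (sum_binf (zero_pairs (2 * length N)))"
  using assms
proof (induction N)
  case (Cons p N)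
  obtain a b where p: "p = (a, b)" by (cases p)
  have D: "4 * a * b - 1 \<noteq> 0" using Cons.prems p by simp
  let ?N = "N @ map neg_pair N"
  have "isometric (sum_binf ([p] @ N @ [neg_pair p] @ map neg_pair N))
      (sum_binf ([p] @ [neg_pair p] @ ?N))"
    by (rule isometric_sum_binf_append_right)
      (use isometric_sum_binf_append_left[OF isometric_sum_binf_append_swap[of N "[neg_pair p]"]] in simp)
  also have "isometric \<dots> (sum_binf (zero_pairs 2 @ ?N))"
    using isometric_sum_binf_append_left[OF isometric_sym[OF isometric_hyp_binf_neg[OF D]]]
    by (simp add: p neg_pair_def numeral_eq_Suc)
  also have "isometric \<dots> (sum_binf (zero_pairs 2 @ zero_pairs (2 * length N)))"
    by (rule isometric_sum_binf_append_right) (use Cons in auto)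
  finally show ?case by (simp add: replicate_add[symmetric])
qed (simp add: isometric_refl)

lemma hyp_0: "hyp 0 = zero_space" by (simp add: hyp_def zero_space_def)

lemma witt_equiv_of_isometric_hyp: "isometric (osum S (hyp k)) (sum_binf T) \<Longrightarrow> witt_equiv S (sum_binf T)"
  unfolding witt_equiv_def
  by (rule exI[of _ k], rule exI[of _ 0]) (metis hyp_0 isometric_osum_zero_space isometric_sym
      isometric_trans)

lemma witt_equiv_cancel_sum_binf:
  assumes "witt_equiv (osum S (sum_binf N)) (sum_binf P)" "\<forall>p\<in>set N. 4 * fst p * snd p - 1 \<noteq> 0"
  shows "\<exists>l. witt_equiv S (sum_binf (P @ zero_pairs l @ map neg_pair N))"
proof -
  obtain k l where "isometric (osum (osum S (sum_binf N)) (hyp k)) (osum (sum_binf P) (hyp l))"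
    using assms(1) unfolding witt_equiv_def by blast
  then have "isometric (osum S (sum_binf (N @ zero_pairs k))) (sum_binf (P @ zero_pairs l))"
    by (simp add: osum_assoc hyp_sum_binf osum_sum_binf)
  then have "isometric (osum (osum S (sum_binf (N @ zero_pairs k))) (sum_binf (map neg_pair N)))
      (osum (sum_binf (P @ zero_pairs l)) (sum_binf (map neg_pair N)))"
    by (rule isometric_osum_left)
  then have a: "isometric (osum S (sum_binf (N @ zero_pairs k @ map neg_pair N)))
      (sum_binf (P @ zero_pairs l @ map neg_pair N))"
    by (simp add: osum_assoc osum_sum_binf)
  have "isometric (sum_binf (zero_pairs (k + 2 * length N))) (sum_binf (zero_pairs k @ N @ map neg_pair N))"
    using isometric_sum_binf_append_right[OF isometric_sum_binf_append_neg[OF assms(2)], of "zero_pairs k"]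
    by (simp add: replicate_add isometric_sym)
  also have "isometric \<dots> (sum_binf (N @ zero_pairs k @ map neg_pair N))"
    using isometric_sum_binf_append_left[OF isometric_sum_binf_append_swap[of "zero_pairs k" N]] by simp
  finally have "isometric (osum S (hyp (k + 2 * length N))) (osum S (sum_binf (N @ zero_pairs k @ map neg_pair N)))"
    unfolding hyp_sum_binf by (rule isometric_osum_right)
  then show ?thesis using witt_equiv_of_isometric_hyp[OF isometric_trans[OF _ a]] by blast
qed

lemma witt_equiv_sum_binf_of_isometric:
  assumes "witt_equiv S T" "isometric T (sum_binf L)"
  shows "\<exists>k l. witt_equiv (osum S (sum_binf (zero_pairs k))) (sum_binf (L @ zero_pairs l))"
proof -
  obtain k l where kl: "isometric (osum S (hyp k)) (osum T (hyp l))"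
    using assms(1) unfolding witt_equiv_def by blast
  have "isometric (osum T (hyp l)) (osum (sum_binf L) (hyp l))" by (rule isometric_osum_left[OF assms(2)])
  then have "isometric (osum S (sum_binf (zero_pairs k))) (sum_binf (L @ zero_pairs l))"
    using kl by (metis hyp_sum_binf isometric_trans osum_sum_binf)
  then have "witt_equiv (osum S (sum_binf (zero_pairs k))) (sum_binf (L @ zero_pairs l))"
    using witt_equiv_of_isometric_hyp[of _ 0] isometric_osum_zero_space isometric_trans hyp_0 by metis
  then show ?thesis by blast
qed

definition unit_vec :: "nat \<Rightarrow> nat \<Rightarrow> 'a::field" where "unit_vec j = (\<lambda>i. if i = j then 1 else 0)"

lemma polar_sum_binQ: "polar (sum_binQ L) x y = (\<Sum>k<length L.
    y (2*k) * (2 * fst (L!k) * x (2*k) + x (2*k+1)) + y (2*k+1) * (x (2*k) + 2 * snd (L!k) * x (2*k+1)))"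
  unfolding polar_def sum_binQ_def vadd_def
  by (simp add: sum_subtractf[symmetric] binq_def power2_eq_square algebra_simps)

lemma polar_sum_binQ_unit_even:
  assumes "k < length L"
  shows "polar (sum_binQ L) x (unit_vec (2*k)) = 2 * fst (L!k) * x (2*k) + x (2*k+1)"
proof -
  have "\<And>k'. 2 * k' + 1 \<noteq> 2 * k" by presburger
  then have "polar (sum_binQ L) x (unit_vec (2*k)) =
      (\<Sum>k'<length L. if k' = k then 2 * fst (L!k') * x (2*k') + x (2*k'+1) else 0)"
    unfolding polar_sum_binQ by (intro sum.cong) (auto simp: unit_vec_def)
  then show ?thesis using assms by simp
qed

lemma polar_sum_binQ_unit_odd:
  assumes "k < length L"
  shows "polar (sum_binQ L) x (unit_vec (2*k+1)) = x (2*k) + 2 * snd (L!k) * x (2*k+1)"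
proof -
  have "\<And>k'. 2 * k' \<noteq> 2 * k + 1" by presburger
  then have "polar (sum_binQ L) x (unit_vec (2*k+1)) =
      (\<Sum>k'<length L. if k' = k then x (2*k') + 2 * snd (L!k') * x (2*k'+1) else 0)"
    unfolding polar_sum_binQ by (intro sum.cong) (auto simp: unit_vec_def)
  then show ?thesis using assms by simp
qed

lemma binf_sum_binf: "binf a b = sum_binf [(a,b)]"
  by (simp add: binf_def sum_binf_eq_sum_binQ sum_binQ_def binq_def fun_eq_iff)

lemma is_qform_sum_binf: "is_qform (sum_binf L)"
  unfolding sum_binf_eq_sum_binQ is_qform_def
proof (simp, intro conjI ballI allI)
  fix x :: "nat \<Rightarrow> 'a" and c
  show "sum_binQ L (vscale c x) = c\<^sup>2 * sum_binQ L x"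
    unfolding sum_binQ_def vscale_def by (simp add: sum_distrib_left binq_def power2_eq_square algebra_simps)
next
  fix x y z :: "nat \<Rightarrow> 'a"
  show "polar (sum_binQ L) (vadd x y) z = polar (sum_binQ L) x z + polar (sum_binQ L) y z"
    unfolding polar_sum_binQ vadd_def by (simp add: sum.distrib[symmetric] algebra_simps)
next
  fix x y :: "nat \<Rightarrow> 'a" and c
  show "polar (sum_binQ L) (vscale c x) y = c * polar (sum_binQ L) x y"
    unfolding polar_sum_binQ vscale_def by (simp add: sum_distrib_left algebra_simps)
qed

lemma nonsingular_sum_binf: assumes "\<forall>p\<in>set L. 4 * fst p * snd p - 1 \<noteq> 0" shows "nonsingular (sum_binf L)"
  unfolding nonsingular_def
proof (intro conjI is_qform_sum_binf)
  show "case sum_binf L of (n, Q) \<Rightarrow> \<forall>x\<in>vecs n. (\<forall>y\<in>vecs n. polar Q x y = 0) \<longrightarrow> x = (\<lambda>_. 0)"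
    unfolding sum_binf_eq_sum_binQ
  proof (simp, intro ballI impI ext)
    fix x :: "nat \<Rightarrow> 'a" and i
    assume x: "x \<in> vecs (2 * length L)" and p: "\<forall>y\<in>vecs (2 * length L). polar (sum_binQ L) x y = 0"
    have blk: "x (2*k) = 0 \<and> x (2*k+1) = 0" if k: "k < length L" for k
    proof -
      have u1: "unit_vec (2*k) \<in> vecs (2 * length L)" "unit_vec (2*k+1) \<in> vecs (2 * length L)"
        using k by (auto simp: unit_vec_def vecs_def)
      have e1: "2 * fst (L!k) * x (2*k) + x (2*k+1) = 0"
        using p[rule_format, OF u1(1)] polar_sum_binQ_unit_even[OF k, of x] by simp
      have e2: "x (2*k) + 2 * snd (L!k) * x (2*k+1) = 0"
        using p[rule_format, OF u1(2)] polar_sum_binQ_unit_odd[OF k, of x] by simp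
      have D: "4 * fst (L!k) * snd (L!k) - 1 \<noteq> 0" using assms k by auto
      have "x (2*k+1) = - 2 * fst (L!k) * x (2*k)" using e1 by (simp add: eq_neg_iff_add_eq_0 add.commute)
      then have "x (2*k) * (4 * fst (L!k) * snd (L!k) - 1) = 0" using e2 by (simp add: algebra_simps)
      then have "x (2*k) = 0" using D by simp
      then show ?thesis using e1 by simp
    qed
    show "x i = 0"
    proof (cases "i < 2 * length L")
      case True
      have "i div 2 < length L" using True by linarith
      then consider "even i" "i div 2 < length L" | "odd i" "i div 2 < length L" by blast
      then show ?thesis
      proof cases
        case 1 then show ?thesis using blk[of "i div 2"] by simp
      next
        case 2 then show ?thesis using blk[of "i div 2"] by (metis odd_two_times_div_two_succ)
      qed
    next
      case False then show ?thesis using x by (simp add: vecs_def)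
    qed
  qed
qed

definition coord_norm ::
    "('a::field \<Rightarrow> 'g::linordered_ab_group_add) \<Rightarrow> (nat \<Rightarrow> 'g) \<Rightarrow> nat \<Rightarrow> (nat \<Rightarrow> 'a) \<Rightarrow> 'g" where
  "coord_norm v w n x = Min {v (x i) + w i | i. i < n \<and> x i \<noteq> 0}"

lemma coord_norm_le: "i < n \<Longrightarrow> x i \<noteq> 0 \<Longrightarrow> coord_norm v w n x \<le> v (x i) + w i"
  unfolding coord_norm_def by (rule Min_le) auto

lemma coord_norm_attained: assumes "x \<in> vecs n" "x \<noteq> (\<lambda>_. 0)"
  shows "\<exists>i<n. x i \<noteq> 0 \<and> coord_norm v w n x = v (x i) + w i"
proof -
  obtain j where j: "x j \<noteq> 0" using assms(2) by auto
  then have "j < n" using assms(1) by (rule_tac ccontr) (auto simp: vecs_def)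
  then have ne: "{v (x i) + w i | i. i < n \<and> x i \<noteq> 0} \<noteq> {}" using j by auto
  have "finite {v (x i) + w i | i. i < n \<and> x i \<noteq> 0}" by simp
  from Min_in[OF this ne] show ?thesis unfolding coord_norm_def by auto
qed

lemma coord_norm_unit_vec: "j < n \<Longrightarrow> valuation v \<Longrightarrow> coord_norm v w n (unit_vec j) = w j"
proof -
  assume j: "j < n" and v: "valuation v"
  have "{v (unit_vec j i) + w i | i. i < n \<and> (unit_vec j i :: 'a) \<noteq> 0} = {w j}"
    using j val_one[OF v] by (auto simp: unit_vec_def)
  then show ?thesis unfolding coord_norm_def by simp
qed

lemma unit_vec_vecs: "j < n \<Longrightarrow> unit_vec j \<in> vecs n" by (auto simp: unit_vec_def vecs_def)
lemma unit_vec_nonzero: "unit_vec j \<noteq> (\<lambda>_. 0::'a::field)" by (auto simp: unit_vec_def fun_eq_iff)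

lemma coord_norm_vscale:
  assumes v: "valuation v" and x: "x \<in> vecs n" "x \<noteq> (\<lambda>_. 0)" and k: "k \<noteq> 0"
  shows "coord_norm v w n (vscale k x) = v k + coord_norm v w n x"
proof -
  have sx: "vscale k x \<in> vecs n" "vscale k x \<noteq> (\<lambda>_. 0)"
    using x k by (auto simp: vscale_def fun_eq_iff vecs_def)
  obtain i where i: "i < n" "vscale k x i \<noteq> 0" "coord_norm v w n (vscale k x) = v (vscale k x i) + w i"
    using coord_norm_attained[OF sx] by blast
  obtain j where j: "j < n" "x j \<noteq> 0" "coord_norm v w n x = v (x j) + w j"
    using coord_norm_attained[OF x] by blast
  have xi: "x i \<noteq> 0" "v (vscale k x i) = v k + v (x i)" using i k val_mult[OF v] by (auto simp: vscale_def)
  have xj: "vscale k x j \<noteq> 0" "v (vscale k x j) = v k + v (x j)" using j k val_mult[OF v]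
    by (auto simp: vscale_def)
  have "coord_norm v w n (vscale k x) \<le> v k + coord_norm v w n x"
    using coord_norm_le[of j n "vscale k x" v w, OF j(1) xj(1)] xj(2) j(3) by (simp add: add.assoc)
  moreover have "v k + coord_norm v w n x \<le> coord_norm v w n (vscale k x)"
    using coord_norm_le[of i n x v w, OF i(1) xi(1)] xi(2) i(3) by (simp add: add.assoc)
  ultimately show ?thesis by simp
qed

lemma coord_norm_vadd:
  assumes v: "valuation v" and xy: "x \<in> vecs n" "y \<in> vecs n" "vadd x y \<noteq> (\<lambda>_. 0)"
  shows "min (coord_norm v w n x) (coord_norm v w n y) \<le> coord_norm v w n (vadd x y)"
proof -
  obtain i where i: "i < n" "vadd x y i \<noteq> 0" "coord_norm v w n (vadd x y) = v (vadd x y i) + w i"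
    using coord_norm_attained[OF vadd_vecs[OF xy(1,2)] xy(3)] by blast
  let ?m = "min (coord_norm v w n x) (coord_norm v w n y)"
  have "?m - w i \<le> v (x i + y i)"
  proof (rule val_add_ge[OF v])
    show "x i + y i \<noteq> 0" using i by (simp add: vadd_def)
    show "?m - w i \<le> v (x i)" if "x i \<noteq> 0"
      using coord_norm_le[of i n x v w, OF i(1) that] by (simp add: diff_le_eq min.coboundedI1)
    show "?m - w i \<le> v (y i)" if "y i \<noteq> 0"
      using coord_norm_le[of i n y v w, OF i(1) that] by (simp add: diff_le_eq min.coboundedI2)
  qed
  then show ?thesis using i(3) by (simp add: vadd_def diff_le_eq)
qed

lemma lincomb_unit_vec: "c \<in> vecs n \<Longrightarrow> (\<lambda>j. \<Sum>i<n. c i * unit_vec i j) = c"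
proof (rule ext)
  fix j assume "c \<in> vecs n"
  moreover have "(\<Sum>i<n. c i * unit_vec i j) = (\<Sum>i<n. if j = i then c i else 0)"
    by (rule sum.cong) (auto simp: unit_vec_def)
  ultimately show "(\<Sum>i<n. c i * unit_vec i j) = c j" by (auto simp: vecs_def)
qed

lemma vnorm_coord_norm:
  fixes v :: "'a::field \<Rightarrow> 'g::linordered_ab_group_add"
  assumes v: "valuation v"
  shows "vnorm v n (coord_norm v w n)"
  unfolding vnorm_def
proof (intro conjI allI ballI impI exI[of _ unit_vec])
  show "bij_betw (\<lambda>c j. \<Sum>i<n. c i * (unit_vec i j :: 'a)) (vecs n) (vecs n)"
    by (rule bij_betw_byWitness[where f'=id]) (auto simp: lincomb_unit_vec)
  fix c :: "nat \<Rightarrow> 'a" assume c: "c \<in> vecs n" "c \<noteq> (\<lambda>_. 0)"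
  have "{v (c i) + coord_norm v w n (unit_vec i) |i. i < n \<and> c i \<noteq> 0} = {v (c i) + w i |i. i < n \<and> c i \<noteq> 0}"
    using coord_norm_unit_vec[OF _ v] by (intro Collect_cong) (metis (no_types, lifting))
  then show "coord_norm v w n (\<lambda>j. \<Sum>i<n. c i * unit_vec i j) =
      Min {v (c i) + coord_norm v w n (unit_vec i) |i. i < n \<and> c i \<noteq> 0}"
    unfolding lincomb_unit_vec[OF c(1)] coord_norm_def by simp
qed (auto intro: unit_vec_vecs coord_norm_vscale[OF v] coord_norm_vadd[OF v])

text \<open>Weights for which the coordinate norm of the sum of the forms [a_k, b_k] in L is
  compatible of depth \<gamma>: the constraint on w (2k+1) makes the polar value 1 of the k-th
  basis pair attain the depth.\<close>

definition adapted_weights ::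
    "('a::field \<Rightarrow> 'g::linordered_ab_group_add) \<Rightarrow> 'g \<Rightarrow> ('a \<times> 'a) list \<Rightarrow> (nat \<Rightarrow> 'g) \<Rightarrow> bool" where
  "adapted_weights v \<gamma> L w \<longleftrightarrow> (\<forall>k<length L. w (2*k+1) = - \<gamma> - w (2*k) \<and>
      val_ge v (w (2*k) + w (2*k)) (fst (L!k)) \<and> val_ge v (w (2*k+1) + w (2*k+1)) (snd (L!k)))"

lemma val_ge_coord: "i < n \<Longrightarrow> val_ge v (coord_norm v w n x - w i) (x i)"
  unfolding val_ge_def using coord_norm_le[of i n x v w] by (simp add: diff_le_eq)

locale depth =
  fixes v :: "'a::field \<Rightarrow> 'g::linordered_ab_group_add" and \<gamma> :: 'g
  assumes val: "valuation v" and depth_nonneg: "0 \<le> \<gamma>" and depth_below_v2: "(2::'a) = 0 \<or> \<gamma> < v 2"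
begin

lemma val_ge_two: "val_ge v \<gamma> (2::'a)" unfolding val_ge_def using depth_below_v2 by auto

lemma depth_less_val_two: "(2::'a) \<noteq> 0 \<Longrightarrow> \<gamma> < v 2" using depth_below_v2 by auto

context
  fixes L :: "('a \<times> 'a) list" and w :: "nat \<Rightarrow> 'g"
  assumes fit: "adapted_weights v \<gamma> L w"
begin

private lemma weight_odd: "k < length L \<Longrightarrow> w (2*k+1) = - \<gamma> - w (2*k)"
  and val_ge_fst: "k < length L \<Longrightarrow> val_ge v (w (2*k) + w (2*k)) (fst (L!k))"
  and val_ge_snd: "k < length L \<Longrightarrow> val_ge v (w (2*k+1) + w (2*k+1)) (snd (L!k))"
  using fit unfolding adapted_weights_def by blast+

private abbreviation "\<alpha> \<equiv> coord_norm v w (2 * length L)"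

private lemma val_ge_coord': "k < length L \<Longrightarrow> val_ge v (\<alpha> x - w (2*k)) (x (2*k))"
    "k < length L \<Longrightarrow> val_ge v (\<alpha> x - w (2*k+1)) (x (2*k+1))"
  by (auto intro: val_ge_coord)

lemma val_ge_polar_sum_binQ: "val_ge v (\<alpha> x + \<alpha> y + \<gamma>) (polar (sum_binQ L) x y)"
  unfolding polar_sum_binQ
proof (intro val_ge_sum[OF val] finite_lessThan)
  fix k assume "k \<in> {..<length L}"
  then have k: "k < length L" by simp
  let ?a = "fst (L!k)" and ?b = "snd (L!k)" and ?l = "\<alpha> x + \<alpha> y + \<gamma>"
  have w1: "w (Suc (k*2)) = - \<gamma> - w (k*2)" using weight_odd[OF k] by (simp add: mult.commute)
  note cx = val_ge_coord'[OF k]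
  have "val_ge v ?l (y (2*k) * ((2 * ?a) * x (2*k)))"
    by (rule val_ge_mono[OF _ val_ge_mult[OF val cx(1) val_ge_mult[OF val val_ge_mult[OF val
          val_ge_two val_ge_fst[OF k]] cx(1)]]]) (use depth_nonneg in \<open>simp add: algebra_simps\<close>)
  moreover have "val_ge v ?l (y (2*k) * x (2*k+1))"
    by (rule val_ge_mono[OF _ val_ge_mult[OF val cx(1) cx(2)]]) (simp add: algebra_simps w1)
  moreover have "val_ge v ?l (y (2*k+1) * x (2*k))"
    by (rule val_ge_mono[OF _ val_ge_mult[OF val cx(2) cx(1)]]) (simp add: algebra_simps w1)
  moreover have "val_ge v ?l (y (2*k+1) * ((2 * ?b) * x (2*k+1)))"
    by (rule val_ge_mono[OF _ val_ge_mult[OF val cx(2) val_ge_mult[OF val val_ge_mult[OF val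
          val_ge_two val_ge_snd[OF k]] cx(2)]]]) (simp add: algebra_simps)
  ultimately show "val_ge v ?l
      (y (2*k) * (2 * ?a * x (2*k) + x (2*k+1)) + y (2*k+1) * (x (2*k) + 2 * ?b * x (2*k+1)))"
    by (simp add: distrib_left mult.assoc add.assoc val_ge_add[OF val])
qed

lemma val_ge_sum_binQ: "val_ge v (\<alpha> x + \<alpha> x) (sum_binQ L x)"
  unfolding sum_binQ_def
proof (intro val_ge_sum[OF val] finite_lessThan)
  fix k assume "k \<in> {..<length L}"
  then have k: "k < length L" by simp
  let ?a = "fst (L!k)" and ?b = "snd (L!k)" and ?l = "\<alpha> x + \<alpha> x"
  have w1: "w (Suc (k*2)) = - \<gamma> - w (k*2)" using weight_odd[OF k] by (simp add: mult.commute)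
  note cx = val_ge_coord'[OF k]
  have "val_ge v ?l (?a * (x (2*k) * x (2*k)))"
    by (rule val_ge_mono[OF _ val_ge_mult[OF val val_ge_fst[OF k] val_ge_mult[OF val cx(1) cx(1)]]])
      (simp add: algebra_simps)
  moreover have "val_ge v ?l (x (2*k) * x (2*k+1))"
    by (rule val_ge_mono[OF _ val_ge_mult[OF val cx(1) cx(2)]])
      (use depth_nonneg in \<open>simp add: algebra_simps w1\<close>)
  moreover have "val_ge v ?l (?b * (x (2*k+1) * x (2*k+1)))"
    by (rule val_ge_mono[OF _ val_ge_mult[OF val val_ge_snd[OF k] val_ge_mult[OF val cx(2) cx(2)]]])
      (simp add: algebra_simps)
  ultimately show "val_ge v ?l (binq ?a ?b (x (2*k)) (x (2*k+1)))"
    by (simp add: binq_def power2_eq_square val_ge_add[OF val])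
qed

text \<open>If the norm of x is attained at the even coordinate 2k, the odd unit vector of the
  same block attains the depth, and vice versa: in the polar value the term carrying the factor 2
  has strictly larger valuation, as v 2 > \<gamma>.\<close>

lemma polar_unit_vec_odd_attains_depth:
  assumes k: "k < length L" and x: "x (2*k) \<noteq> 0" "\<alpha> x = v (x (2*k)) + w (2*k)"
  shows "polar (sum_binQ L) x (unit_vec (2*k+1)) \<noteq> 0 \<and>
    v (polar (sum_binQ L) x (unit_vec (2*k+1))) = \<alpha> x + \<alpha> (unit_vec (2*k+1)) + \<gamma>"
proof -
  let ?u = "- (2 * snd (L!k) * x (2*k+1))"
  have "x (2*k) - ?u \<noteq> 0 \<and> v (x (2*k) - ?u) = v (x (2*k))"
  proof (rule val_diff_dominant[OF val x(1)])
    assume "?u \<noteq> 0"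
    then have nz: "(2::'a) \<noteq> 0" "snd (L!k) \<noteq> 0" "x (2*k+1) \<noteq> 0" by auto
    have vu: "v ?u = v 2 + v (snd (L!k)) + v (x (2*k+1))"
      using nz val_mult[OF val] val_neg[OF val] by simp
    have "\<gamma> < v 2" using depth_less_val_two nz by blast
    moreover have "w (2*k+1) + w (2*k+1) \<le> v (snd (L!k))"
      using val_ge_snd[OF k] nz unfolding val_ge_def by blast
    moreover have "\<alpha> x - w (2*k+1) \<le> v (x (2*k+1))"
      using val_ge_coord'(2)[OF k] nz unfolding val_ge_def by blast
    ultimately show "v (x (2*k)) < v ?u"
      unfolding vu by (rule less_by_gaps3) (use x(2) weight_odd[OF k] in \<open>simp add: algebra_simps\<close>)
  qed
  moreover have "\<alpha> (unit_vec (2*k+1)) = w (2*k+1)" using coord_norm_unit_vec[OF _ val] k by simp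
  ultimately show ?thesis
    using polar_sum_binQ_unit_odd[OF k, of x] x(2) weight_odd[OF k]
    by (simp add: diff_minus_eq_add algebra_simps)
qed

lemma polar_unit_vec_even_attains_depth:
  assumes k: "k < length L" and x: "x (2*k+1) \<noteq> 0" "\<alpha> x = v (x (2*k+1)) + w (2*k+1)"
  shows "polar (sum_binQ L) x (unit_vec (2*k)) \<noteq> 0 \<and>
    v (polar (sum_binQ L) x (unit_vec (2*k))) = \<alpha> x + \<alpha> (unit_vec (2*k)) + \<gamma>"
proof -
  let ?u = "- (2 * fst (L!k) * x (2*k))"
  have "x (2*k+1) - ?u \<noteq> 0 \<and> v (x (2*k+1) - ?u) = v (x (2*k+1))"
  proof (rule val_diff_dominant[OF val x(1)])
    assume "?u \<noteq> 0"
    then have nz: "(2::'a) \<noteq> 0" "fst (L!k) \<noteq> 0" "x (2*k) \<noteq> 0" by auto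
    have vu: "v ?u = v 2 + v (fst (L!k)) + v (x (2*k))"
      using nz val_mult[OF val] val_neg[OF val] by simp
    have "\<gamma> < v 2" using depth_less_val_two nz by blast
    moreover have "w (2*k) + w (2*k) \<le> v (fst (L!k))"
      using val_ge_fst[OF k] nz unfolding val_ge_def by blast
    moreover have "\<alpha> x - w (2*k) \<le> v (x (2*k))"
      using val_ge_coord'(1)[OF k] nz unfolding val_ge_def by blast
    ultimately show "v (x (2*k+1)) < v ?u"
      unfolding vu by (rule less_by_gaps3) (use x(2) weight_odd[OF k] in \<open>simp add: algebra_simps\<close>)
  qed
  moreover have "\<alpha> (unit_vec (2*k)) = w (2*k)" using coord_norm_unit_vec[OF _ val] k by simp
  ultimately show ?thesis
    using polar_sum_binQ_unit_even[OF k, of x] x(2) weight_odd[OF k]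
    by (simp add: diff_minus_eq_add algebra_simps)
qed

lemma polar_sum_binQ_attains_depth:
  assumes x: "x \<in> vecs (2 * length L)" "x \<noteq> (\<lambda>_. 0)"
  shows "\<exists>y\<in>vecs (2 * length L). y \<noteq> (\<lambda>_. 0) \<and> polar (sum_binQ L) x y \<noteq> 0 \<and>
           v (polar (sum_binQ L) x y) = \<alpha> x + \<alpha> y + \<gamma>"
proof -
  obtain i where i: "i < 2 * length L" "x i \<noteq> 0" "\<alpha> x = v (x i) + w i"
    using coord_norm_attained[OF x] by blast
  define k where "k = i div 2"
  have "k < length L" using i(1) unfolding k_def by linarith
  then have k: "k < length L" "2*k < 2 * length L" "2*k+1 < 2 * length L" by auto
  show ?thesis
  proof (cases "even i")
    case True
    then have "i = 2*k" unfolding k_def by simp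
    then show ?thesis using polar_unit_vec_odd_attains_depth[OF k(1)] i unit_vec_vecs[OF k(3)]
      unit_vec_nonzero by blast
  next
    case False
    then have "i = 2*k+1" unfolding k_def by simp
    then show ?thesis using polar_unit_vec_even_attains_depth[OF k(1)] i unit_vec_vecs[OF k(2)]
      unit_vec_nonzero by blast
  qed
qed

lemma compatible_coord_norm_sum_binf: "compatible v (sum_binf L) \<alpha> \<gamma>"
  unfolding compatible_def sum_binf_eq_sum_binQ
  using depth_nonneg vnorm_coord_norm[OF val] val_ge_polar_sum_binQ val_ge_sum_binQ
      polar_sum_binQ_attains_depth
  unfolding val_ge_def by auto

end

text \<open>4ab - 1 is, up to sign, the discriminant of [a,b].\<close>

lemma gen_cond_disc_unit:
  assumes "gen_cond v \<gamma> a b"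
  shows "4 * a * b - 1 \<noteq> 0 \<and> v (4 * a * b - 1) = 0"
proof (rule val_sub_one[OF val])
  assume ab: "4 * a * b \<noteq> 0"
  have "(2::'a) \<noteq> 0"
  proof
    assume two: "(2::'a) = 0"
    have "(4::'a) = 2 + 2" by simp
    also have "\<dots> = 0" using two by simp
    finally show False using ab by simp
  qed
  with ab have nz: "(2::'a) \<noteq> 0" "a \<noteq> 0" "b \<noteq> 0" by auto
  have "v (2 * (2 * (a * b))) = v 2 + (v 2 + (v a + v b))"
    using nz val_mult[OF val, of 2 "2 * (a * b)"] val_mult[OF val, of 2 "a * b"] val_mult[OF val, of a b]
    by (simp del: mult_2)
  moreover have "4 * a * b = 2 * (2 * (a * b))" by simp
  ultimately have v4: "v (4 * a * b) = v 2 + v 2 + (v a + v b)" by (simp add: add.assoc mult.assoc)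
  have g: "\<gamma> < v 2" using depth_less_val_two nz by blast
  have "- (\<gamma> + \<gamma>) \<le> v a + v b" using assms nz unfolding gen_cond_def by auto
  then show "0 < v (4 * a * b)"
    unfolding v4 by (rule less_by_gaps3[OF g less_imp_le[OF g]]) (simp add: algebra_simps)
qed

lemma gen_cond_disc: "gen_cond v \<gamma> a b \<Longrightarrow> 4 * a * b - 1 \<noteq> 0"
  using gen_cond_disc_unit by blast

lemma gen_cond_list_disc:
  assumes "\<forall>(a, b)\<in>set L. gen_cond v \<gamma> a b"
  shows "\<forall>p\<in>set L. 4 * fst p * snd p - 1 \<noteq> 0"
proof
  fix p assume "p \<in> set L"
  then have "case p of (a, b) \<Rightarrow> gen_cond v \<gamma> a b" using assms by blast
  then show "4 * fst p * snd p - 1 \<noteq> 0" using gen_cond_disc by (simp add: case_prod_beta)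
qed

lemma nonsingular_sum_binf_of_gen_cond:
  "\<forall>(a, b)\<in>set L. gen_cond v \<gamma> a b \<Longrightarrow> nonsingular (sum_binf L)"
  by (rule nonsingular_sum_binf[OF gen_cond_list_disc])

lemma gen_cond_neg: "gen_cond v \<gamma> a b \<Longrightarrow> gen_cond v \<gamma> (-a) (-b)"
  unfolding gen_cond_def using val_neg[OF val, of a] val_neg[OF val, of b] by simp

definition half :: "'g \<Rightarrow> 'g" where "half g = (SOME h. h + h = g)"

lemma half_add_half: assumes "divisible_group (UNIV :: 'g set)" shows "half g + half g = g"
proof -
  have "\<exists>h\<in>UNIV. (\<Sum>i<(2::nat). h) = g"
    using assms[unfolded divisible_group_def, rule_format, of g 2] by simp
  then obtain h where "(\<Sum>i<2::nat. h) = g" by blast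
  then have "h + h = g" by (simp add: eval_nat_numeral)
  then show ?thesis unfolding half_def by (rule someI)
qed

lemma adapted_weights_exist: assumes div: "divisible_group (UNIV :: 'g set)"
  and gen: "\<forall>(a,b)\<in>set L. gen_cond v \<gamma> a b"
  shows "\<exists>w. adapted_weights v \<gamma> L w"
proof -
  define W where "W k = (if fst (L!k) \<noteq> 0 then half (v (fst (L!k)))
      else if snd (L!k) \<noteq> 0 then - \<gamma> - half (v (snd (L!k))) else 0)" for k
  define w where "w i = (if even i then W (i div 2) else - \<gamma> - W (i div 2))" for i
  have "adapted_weights v \<gamma> L w" unfolding adapted_weights_def
  proof (intro allI impI conjI)
    fix k assume k: "k < length L"
    have w0: "w (2*k) = W k" and w1: "w (2*k+1) = - \<gamma> - W k" unfolding w_def by simp_all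
    show "w (2*k+1) = - \<gamma> - w (2*k)" unfolding w0 w1 ..
    have "L!k \<in> set L" using k by simp
    then have "case L!k of (a,b) \<Rightarrow> gen_cond v \<gamma> a b" by (rule bspec[OF gen])
    then have g: "gen_cond v \<gamma> (fst (L!k)) (snd (L!k))" by (simp add: case_prod_beta)
    show "val_ge v (w (2*k) + w (2*k)) (fst (L!k))"
      unfolding val_ge_def w0 W_def using half_add_half[OF div, of "v (fst (L!k))"] by auto
    show "val_ge v (w (2*k+1) + w (2*k+1)) (snd (L!k))"
      unfolding val_ge_def w1
    proof
      assume b: "snd (L!k) \<noteq> 0"
      show "- \<gamma> - W k + (- \<gamma> - W k) \<le> v (snd (L!k))"
      proof (cases "fst (L!k) = 0")
        case True
        then have "W k = - \<gamma> - half (v (snd (L!k)))" using b unfolding W_def by simp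
        then have "- \<gamma> - W k = half (v (snd (L!k)))" by simp
        then show ?thesis using half_add_half[OF div, of "v (snd (L!k))"] by simp
      next
        case False
        then have Wk: "W k = half (v (fst (L!k)))" unfolding W_def by simp
        have h: "- (\<gamma> + \<gamma>) \<le> v (fst (L!k)) + v (snd (L!k))" using g False b unfolding gen_cond_def by auto
        show ?thesis unfolding Wk
          by (rule le_by_gaps1[OF h])
            (use half_add_half[OF div, of "v (fst (L!k))"] in \<open>simp add: algebra_simps\<close>)
      qed
    qed
  qed
  then show ?thesis by blast
qed

lemma in_W_eps_if_in_generated:
  assumes div: "divisible_group (UNIV :: 'g set)" and ig: "in_generated v \<gamma> S"
  shows "in_W_eps v \<gamma> S"
proof -
  obtain P N where P: "\<forall>(a, b)\<in>set P. gen_cond v \<gamma> a b" and N: "\<forall>(a, b)\<in>set N. gen_cond v \<gamma> a b"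
    and we: "witt_equiv (osum S (sum_binf N)) (sum_binf P)"
    using ig unfolding in_generated_def by auto
  obtain l where T: "witt_equiv S (sum_binf (P @ zero_pairs l @ map neg_pair N))"
    using witt_equiv_cancel_sum_binf[OF we gen_cond_list_disc[OF N]] by blast
  define L where "L = P @ zero_pairs l @ map neg_pair N"
  have gL: "\<forall>(a, b)\<in>set L. gen_cond v \<gamma> a b"
  proof
    fix p assume "p \<in> set L"
    then consider "p \<in> set P" | "p = (0, 0)" | q where "q \<in> set N" "p = neg_pair q"
      unfolding L_def by (auto split: if_splits)
    then show "case p of (a, b) \<Rightarrow> gen_cond v \<gamma> a b"
    proof cases
      case (3 q)
      then have "case q of (a, b) \<Rightarrow> gen_cond v \<gamma> a b" using N by blast
      then show ?thesis using 3(2) gen_cond_neg by (simp add: neg_pair_def case_prod_beta)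
    qed (use P in \<open>auto simp: gen_cond_def\<close>)
  qed
  obtain w where w: "adapted_weights v \<gamma> L w" using adapted_weights_exist[OF div gL] by blast
  show ?thesis unfolding in_W_eps_def
    using nonsingular_sum_binf_of_gen_cond[OF gL] T compatible_coord_norm_sum_binf[OF w]
    unfolding L_def by blast
qed

end

definition lincomb :: "nat set \<Rightarrow> (nat \<Rightarrow> 'a::field) \<Rightarrow> (nat \<Rightarrow> nat \<Rightarrow> 'a) \<Rightarrow> nat \<Rightarrow> 'a" where
  "lincomb I c g = (\<lambda>j. \<Sum>i\<in>I. c i * g i j)"

abbreviation vzero :: "nat \<Rightarrow> 'a::field" where "vzero \<equiv> (\<lambda>_. 0)"

lemma lincomb_empty[simp]: "lincomb {} c g = vzero" by (simp add: lincomb_def)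

lemma lincomb_insert: "finite I \<Longrightarrow> i \<notin> I \<Longrightarrow> lincomb (insert i I) c g
    = vadd (vscale (c i) (g i)) (lincomb I c g)"
  by (simp add: lincomb_def vadd_def vscale_def fun_eq_iff)

lemma lincomb_vecs: "finite I \<Longrightarrow> (\<And>i. i \<in> I \<Longrightarrow> g i \<in> vecs n) \<Longrightarrow> lincomb I c g \<in> vecs n"
  by (auto simp: lincomb_def vecs_def)

lemma lincomb_cong: "(\<And>i. i \<in> I \<Longrightarrow> c i = c' i) \<Longrightarrow> lincomb I c g = lincomb I c' g"
  by (simp add: lincomb_def)

lemma lincomb_cong_vectors: "(\<And>i. i \<in> I \<Longrightarrow> g i = g' i) \<Longrightarrow> lincomb I c g = lincomb I c g'"
  by (simp add: lincomb_def)

lemma vadd_zero_left[simp]: "vadd vzero y = y" by (simp add: vadd_def)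
lemma vadd_zero_right[simp]: "vadd y vzero = y" by (simp add: vadd_def)
lemma vscale_zero[simp]: "vscale 0 x = vzero" by (simp add: vscale_def)

lemma vscale_nz: "c \<noteq> 0 \<Longrightarrow> x \<noteq> vzero \<Longrightarrow> vscale c x \<noteq> vzero"
  by (auto simp: vscale_def fun_eq_iff)

lemma lincomb_indicator: assumes "i \<in> I" "finite I" shows "lincomb I (\<lambda>k. if k = i then 1 else 0) g = g i"
proof (rule ext)
  fix x
  have "lincomb I (\<lambda>k. if k = i then 1 else 0) g x = (\<Sum>k\<in>I. if k = i then g k x else 0)"
    unfolding lincomb_def by (rule sum.cong) auto
  then show "lincomb I (\<lambda>k. if k = i then 1 else 0) g x = g i x" using assms by simp
qed

lemma vadd_comm: "vadd x y = vadd y x"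
  by (simp add: vadd_def add.commute fun_eq_iff)

locale qform =
  fixes n :: nat and Q :: "(nat \<Rightarrow> 'a::field) \<Rightarrow> 'a"
  assumes is_qform_Q: "is_qform (n, Q)"
begin

abbreviation V where "V \<equiv> vecs n"

lemma Q_scale: "x \<in> V \<Longrightarrow> Q (vscale c x) = c^2 * Q x" using is_qform_Q unfolding is_qform_def by simp
lemma polar_add_left: "x \<in> V \<Longrightarrow> y \<in> V \<Longrightarrow> z \<in> V \<Longrightarrow> polar Q (vadd x y) z = polar Q x z + polar Q y z"
  using is_qform_Q unfolding is_qform_def by simp
lemma polar_scale_left: "x \<in> V \<Longrightarrow> y \<in> V \<Longrightarrow> polar Q (vscale c x) y = c * polar Q x y"
  using is_qform_Q unfolding is_qform_def by simp
lemma polar_commute: "polar Q x y = polar Q y x" unfolding polar_def by (simp add: vadd_comm)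
lemma polar_add_right: "x \<in> V \<Longrightarrow> y \<in> V \<Longrightarrow> z \<in> V \<Longrightarrow> polar Q z (vadd x y) = polar Q z x + polar Q z y"
  by (simp add: polar_commute[of z] polar_add_left)
lemma polar_scale_right: "x \<in> V \<Longrightarrow> y \<in> V \<Longrightarrow> polar Q y (vscale c x) = c * polar Q y x"
  by (simp add: polar_commute[of y] polar_scale_left)
lemma Q_zero: "Q vzero = 0"
proof -
  have "vzero \<in> V" by (simp add: vecs_def)
  then show ?thesis using Q_scale[of vzero 0] by simp
qed
lemma polar_zero_left: "z \<in> V \<Longrightarrow> polar Q vzero z = 0"
  using polar_scale_left[of z z 0] by simp
lemma polar_zero_right: "z \<in> V \<Longrightarrow> polar Q z vzero = 0"
  by (simp add: polar_commute[of z] polar_zero_left)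
lemma Q_vadd: "Q (vadd x y) = Q x + Q y + polar Q x y" unfolding polar_def by simp
lemma polar_diag: "x \<in> V \<Longrightarrow> polar Q x x = 2 * Q x"
proof -
  assume x: "x \<in> V"
  have "vadd x x = vscale 2 x" by (simp add: vadd_def vscale_def fun_eq_iff)
  then have "Q (vadd x x) = 4 * Q x" using Q_scale[OF x, of 2] by simp
  then show ?thesis unfolding polar_def by simp
qed

lemma polar_lincomb_left: assumes "finite I" "\<And>i. i \<in> I \<Longrightarrow> g i \<in> V" "z \<in> V"
  shows "polar Q (lincomb I c g) z = (\<Sum>i\<in>I. c i * polar Q (g i) z)"
  using assms
proof (induction I rule: finite_induct)
  case empty then show ?case using polar_zero_left by simp
next
  case (insert i I)
  have g: "g i \<in> V" "lincomb I c g \<in> V" using insert lincomb_vecs[of I g n c] by auto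
  show ?case unfolding lincomb_insert[OF insert(1,2)]
    using polar_add_left[OF vscale_vecs[OF g(1)] g(2) insert(5)] polar_scale_left[OF g(1) insert(5)]
        insert by simp
qed

lemma polar_lincomb_right: assumes "finite I" "\<And>i. i \<in> I \<Longrightarrow> g i \<in> V" "z \<in> V"
  shows "polar Q z (lincomb I c g) = (\<Sum>i\<in>I. c i * polar Q z (g i))"
  using polar_lincomb_left[OF assms] by (simp add: polar_commute[of z])

end

locale compatible_norm = depth v \<gamma> + qform n Q
  for v :: "'a::field \<Rightarrow> 'g::linordered_ab_group_add" and \<gamma> n Q +
  fixes \<alpha> :: "(nat \<Rightarrow> 'a) \<Rightarrow> 'g"
  assumes vnorm_alpha: "vnorm v n \<alpha>"
    and polar_bound: "\<And>x y. x \<in> V \<Longrightarrow> y \<in> V \<Longrightarrow> x \<noteq> vzero \<Longrightarrow> y \<noteq> vzero \<Longrightarrow> polar Q x y \<noteq> 0 \<Longrightarrow>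
        \<alpha> x + \<alpha> y + \<gamma> \<le> v (polar Q x y)"
    and qform_bound: "\<And>x. x \<in> V \<Longrightarrow> x \<noteq> vzero \<Longrightarrow> Q x \<noteq> 0 \<Longrightarrow> \<alpha> x + \<alpha> x \<le> v (Q x)"
begin

lemma norm_scale: "x \<in> V \<Longrightarrow> x \<noteq> vzero \<Longrightarrow> c \<noteq> 0 \<Longrightarrow> \<alpha> (vscale c x) = v c + \<alpha> x"
  using vnorm_alpha unfolding vnorm_def by blast

lemma norm_add_min: "x \<in> V \<Longrightarrow> y \<in> V \<Longrightarrow> x \<noteq> vzero \<Longrightarrow> y \<noteq> vzero \<Longrightarrow> vadd x y \<noteq> vzero \<Longrightarrow>
    min (\<alpha> x) (\<alpha> y) \<le> \<alpha> (vadd x y)"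
  using vnorm_alpha unfolding vnorm_def by blast

lemma norm_lincomb_ge: assumes "finite I" "\<And>i. i \<in> I \<Longrightarrow> g i \<in> V" "\<And>i. i \<in> I \<Longrightarrow> g i \<noteq> vzero"
  "lincomb I c g \<noteq> vzero" "\<And>i. i \<in> I \<Longrightarrow> c i \<noteq> 0 \<Longrightarrow> l \<le> v (c i) + \<alpha> (g i)"
  shows "l \<le> \<alpha> (lincomb I c g)"
  using assms
proof (induction I rule: finite_induct)
  case empty then show ?case by simp
next
  case (insert i I)
  have gi: "g i \<in> V" "g i \<noteq> vzero" using insert by auto
  have lI: "lincomb I c g \<in> V" using insert lincomb_vecs[of I g n c] by auto
  note e = lincomb_insert[OF insert(1,2), of c g]
  show ?case
  proof (cases "c i = 0")
    case True
    then have eq: "lincomb (insert i I) c g = lincomb I c g" unfolding e by simp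
    have "l \<le> \<alpha> (lincomb I c g)"
      by (rule insert.IH) (use insert.prems eq in auto)
    then show ?thesis using eq by simp
  next
    case ci: False
    have s: "\<alpha> (vscale (c i) (g i)) = v (c i) + \<alpha> (g i)" using norm_scale[OF gi ci] .
    show ?thesis
    proof (cases "lincomb I c g = vzero")
      case True
      then show ?thesis unfolding e using s insert.prems(4) ci by simp
    next
      case False
      have ih: "l \<le> \<alpha> (lincomb I c g)" by (rule insert.IH) (use insert.prems False in auto)
      have nz: "vadd (vscale (c i) (g i)) (lincomb I c g) \<noteq> vzero" using insert.prems(3) e by simp
      have "min (\<alpha> (vscale (c i) (g i))) (\<alpha> (lincomb I c g)) \<le> \<alpha> (vadd (vscale (c i) (g i)) (lincomb I c g))"
        by (rule norm_add_min[OF vscale_vecs[OF gi(1)] lI vscale_nz[OF ci gi(2)] False nz])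
      then have "min (\<alpha> (vscale (c i) (g i))) (\<alpha> (lincomb I c g))
          \<le> \<alpha> (lincomb (insert i I) c g)" unfolding e .
      moreover have "l \<le> min (\<alpha> (vscale (c i) (g i))) (\<alpha> (lincomb I c g))"
        using ih s insert.prems(4)[of i] ci by simp
      ultimately show ?thesis by (rule order_trans[rotated])
    qed
  qed
qed

text \<open>g is a splitting basis (indexed by I) of its span: together with the ultrametric
  inequality the bound below says \<alpha>(\<Sum> c_i g_i) = min (v c_i + \<alpha> g_i).\<close>

definition splitting :: "nat set \<Rightarrow> (nat \<Rightarrow> nat \<Rightarrow> 'a) \<Rightarrow> bool" where
  "splitting I g \<longleftrightarrow> finite I \<and> (\<forall>i\<in>I. g i \<in> V) \<and>
     (\<forall>c. (\<exists>i\<in>I. c i \<noteq> 0) \<longrightarrow> lincomb I c g \<noteq> vzero \<and> (\<forall>i\<in>I. c i \<noteq> 0 \<longrightarrow> \<alpha> (lincomb I c g) \<le> v (c i) + \<alpha> (g i)))"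

definition span :: "nat set \<Rightarrow> (nat \<Rightarrow> nat \<Rightarrow> 'a) \<Rightarrow> (nat \<Rightarrow> 'a) set" where
  "span I g = {lincomb I c g | c. True}"

definition depth_attained :: "nat set \<Rightarrow> (nat \<Rightarrow> nat \<Rightarrow> 'a) \<Rightarrow> bool" where
  "depth_attained I g \<longleftrightarrow> (\<forall>x\<in>span I g. x \<noteq> vzero \<longrightarrow>
     (\<exists>y\<in>span I g. y \<noteq> vzero \<and> polar Q x y \<noteq> 0 \<and> v (polar Q x y) = \<alpha> x + \<alpha> y + \<gamma>))"

lemma splitting_nonzero: assumes "splitting I g" "i \<in> I" shows "g i \<noteq> vzero"
proof -
  have f: "finite I" using assms unfolding splitting_def by blast
  have "lincomb I (\<lambda>k. if k = i then 1 else 0) g \<noteq> vzero" using assms unfolding splitting_def by auto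
  moreover have "lincomb I (\<lambda>k. if k = i then 1 else 0) g = g i" by (rule lincomb_indicator[OF assms(2) f])
  ultimately show ?thesis by simp
qed

lemma splitting_vecs: "splitting I g \<Longrightarrow> i \<in> I \<Longrightarrow> g i \<in> V" unfolding splitting_def by blast
lemma splitting_finite: "splitting I g \<Longrightarrow> finite I" unfolding splitting_def by blast

lemma span_vecs: "splitting I g \<Longrightarrow> z \<in> span I g \<Longrightarrow> z \<in> V"
proof -
  assume s: "splitting I g" and z: "z \<in> span I g"
  then obtain c where "z = lincomb I c g" unfolding span_def by blast
  then show "z \<in> V" using lincomb_vecs[OF splitting_finite[OF s], of g n c] splitting_vecs[OF s] by blast
qed

lemma lincomb_in_span: "lincomb I c g \<in> span I g" unfolding span_def by blast

lemma splitting_lincomb_nonzero: "splitting I g \<Longrightarrow> \<exists>i\<in>I. c i \<noteq> 0 \<Longrightarrow> lincomb I c g \<noteq> vzero"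
  unfolding splitting_def by (elim conjE allE[of _ c]) simp
lemma splitting_norm_le: "splitting I g \<Longrightarrow> i \<in> I \<Longrightarrow> c i \<noteq> 0 \<Longrightarrow> \<alpha> (lincomb I c g) \<le> v (c i) + \<alpha> (g i)"
  unfolding splitting_def by (elim conjE allE[of _ c]) auto

lemma splitting_subset: assumes s: "splitting I h" and J: "J \<subseteq> I" shows "splitting J h"
  unfolding splitting_def
proof (intro conjI allI impI ballI)
  show fJ: "finite J" using splitting_finite[OF s] J finite_subset by blast
  show "\<And>i. i \<in> J \<Longrightarrow> h i \<in> V" using splitting_vecs[OF s] J by blast
  fix c :: "nat \<Rightarrow> 'a" assume c: "\<exists>i\<in>J. c i \<noteq> 0"
  define c0 where "c0 k = (if k \<in> J then c k else 0)" for k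
  have e: "lincomb I c0 h = lincomb J c h"
  proof (rule ext)
    fix m
    have "(\<Sum>k\<in>I. c0 k * h k m) = (\<Sum>k\<in>J. c0 k * h k m)"
      by (rule sum.mono_neutral_right[OF splitting_finite[OF s] J]) (auto simp: c0_def)
    then show "lincomb I c0 h m = lincomb J c h m" unfolding lincomb_def c0_def by simp
  qed
  have c0: "\<exists>i\<in>I. c0 i \<noteq> 0" using c J unfolding c0_def by auto
  show "lincomb J c h \<noteq> vzero" using splitting_lincomb_nonzero[OF s c0] unfolding e .
  fix i assume i: "i \<in> J" "c i \<noteq> 0"
  have ci: "c0 i = c i" "i \<in> I" using i J unfolding c0_def by auto
  then have "c0 i \<noteq> 0" using i by simp
  then have "\<alpha> (lincomb I c0 h) \<le> v (c0 i) + \<alpha> (h i)" by (rule splitting_norm_le[OF s ci(2)])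
  then show "\<alpha> (lincomb J c h) \<le> v (c i) + \<alpha> (h i)" unfolding e ci(1) .
qed

lemma splitting_cong: "splitting I h \<Longrightarrow> (\<And>i. i \<in> I \<Longrightarrow> h i = h' i) \<Longrightarrow> splitting I h'"
proof -
  assume s: "splitting I h" and e: "\<And>i. i \<in> I \<Longrightarrow> h i = h' i"
  have l: "lincomb I c h = lincomb I c h'" for c by (rule lincomb_cong_vectors) (simp add: e)
  show ?thesis using s e unfolding splitting_def l by auto
qed

lemma gen_cond_of_dual_pair: assumes "x \<in> V" "y \<in> V" "x \<noteq> vzero" "y \<noteq> vzero" "\<alpha> x + \<alpha> y + \<gamma> = 0"
  shows "gen_cond v \<gamma> (Q x) (Q y)"
proof (cases "Q x = 0 \<or> Q y = 0")
  case True then show ?thesis by (auto simp: gen_cond_def)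
next
  case False
  then have "Q x \<noteq> 0" "Q y \<noteq> 0" by auto
  then have h1: "\<alpha> x + \<alpha> x \<le> v (Q x)" and h2: "\<alpha> y + \<alpha> y \<le> v (Q y)" using qform_bound assms by auto
  have g: "\<gamma> = - \<alpha> x - \<alpha> y" using assms(5) by (simp add: algebra_simps eq_neg_iff_add_eq_0)
  have "- (\<gamma> + \<gamma>) \<le> v (Q x) + v (Q y)"
    by (rule le_by_gaps2[OF h1 h2]) (simp add: g algebra_simps)
  then show ?thesis by (simp add: gen_cond_def)
qed

lemma member_in_span: "finite I \<Longrightarrow> i \<in> I \<Longrightarrow> g i \<in> span I g"
  unfolding span_def using lincomb_indicator[of i I g] by (metis (mono_tags, lifting) mem_Collect_eq)

text \<open>Here b(x, x) = 2 Q(x) and v 2 > \<gamma>.\<close>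

lemma polar_diag_exceeds_depth:
  assumes "x \<in> V" "x \<noteq> vzero" "polar Q x x \<noteq> 0"
  shows "\<alpha> x + \<alpha> x + \<gamma> < v (polar Q x x)"
proof -
  have P: "polar Q x x = 2 * Q x" by (rule polar_diag[OF assms(1)])
  then have nz: "(2::'a) \<noteq> 0" "Q x \<noteq> 0" using assms(3) by auto
  have "\<gamma> < v 2" using depth_less_val_two nz(1) by blast
  moreover have "\<alpha> x + \<alpha> x \<le> v (Q x)" using qform_bound[OF assms(1,2) nz(2)] .
  ultimately show ?thesis
    unfolding P val_mult[OF val nz] by (rule less_by_gaps2) (simp add: algebra_simps)
qed

lemma splitting_attains_depth:
  assumes sp: "splitting I g" and x: "x \<in> V" "x \<noteq> vzero"
    and y: "y \<in> span I g" "polar Q x y \<noteq> 0" "v (polar Q x y) = \<alpha> x + \<alpha> y + \<gamma>"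
  shows "\<exists>j\<in>I. polar Q x (g j) \<noteq> 0 \<and> v (polar Q x (g j)) = \<alpha> x + \<alpha> (g j) + \<gamma>"
proof -
  have fin: "finite I" and gV: "\<And>i. i \<in> I \<Longrightarrow> g i \<in> V"
    using splitting_finite[OF sp] splitting_vecs[OF sp] by auto
  obtain d where d: "y = lincomb I d g" using y(1) unfolding span_def by blast
  have "polar Q x y = (\<Sum>i\<in>I. d i * polar Q x (g i))"
    unfolding d by (rule polar_lincomb_right[OF fin gV x(1)])
  then obtain j where j: "j \<in> I" "d j * polar Q x (g j) \<noteq> 0" "v (d j * polar Q x (g j)) \<le> v (polar Q x y)"
    using val_sum_witness[OF val fin, of "\<lambda>i. d i * polar Q x (g i)"] y(2) by auto
  have dj: "d j \<noteq> 0" and Pj: "polar Q x (g j) \<noteq> 0" using j(2) by auto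
  have "v (d j) + v (polar Q x (g j)) \<le> \<alpha> x + \<alpha> y + \<gamma>"
    using j(3) val_mult[OF val dj Pj] y(3) by simp
  moreover have "\<alpha> y \<le> v (d j) + \<alpha> (g j)" using splitting_norm_le[of I g j d, OF sp j(1) dj] d by simp
  ultimately have "v (polar Q x (g j)) \<le> \<alpha> x + \<alpha> (g j) + \<gamma>"
    by (rule le_by_gaps2) (simp add: algebra_simps)
  moreover have "\<alpha> x + \<alpha> (g j) + \<gamma> \<le> v (polar Q x (g j))"
    using polar_bound[OF x(1) gV[OF j(1)] x(2) splitting_nonzero[OF sp j(1)] Pj] .
  ultimately show ?thesis using j(1) Pj by (intro bexI[of _ j]) auto
qed

lemma exists_dual_partner:
  assumes sp: "splitting I g" and cs: "depth_attained I g" and i0: "i0 \<in> I"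
  shows "\<exists>j\<in>I. j \<noteq> i0 \<and> polar Q (g i0) (g j) \<noteq> 0 \<and>
           v (polar Q (g i0) (g j)) = \<alpha> (g i0) + \<alpha> (g j) + \<gamma>"
proof -
  have x: "g i0 \<in> V" "g i0 \<noteq> vzero" using splitting_vecs[OF sp i0] splitting_nonzero[OF sp i0] by auto
  have "g i0 \<in> span I g" by (rule member_in_span[OF splitting_finite[OF sp] i0])
  then obtain y where "y \<in> span I g" "polar Q (g i0) y \<noteq> 0" "v (polar Q (g i0) y) = \<alpha> (g i0) + \<alpha> y + \<gamma>"
    using cs x(2) unfolding depth_attained_def by blast
  from splitting_attains_depth[OF sp x this] obtain j where j: "j \<in> I" "polar Q (g i0) (g j) \<noteq> 0"
    "v (polar Q (g i0) (g j)) = \<alpha> (g i0) + \<alpha> (g j) + \<gamma>" by blast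
  have "j \<noteq> i0"
  proof
    assume "j = i0"
    then have "\<alpha> (g i0) + \<alpha> (g i0) + \<gamma> < v (polar Q (g i0) (g j))"
      using polar_diag_exceeds_depth[OF x] j(2) by blast
    then show False using j(3) \<open>j = i0\<close> by (metis less_irrefl)
  qed
  with j show ?thesis by (intro bexI[of _ j]) simp_all
qed

end

text \<open>The remaining vectors are projected along x and y0 to g', orthogonal to
  both, with coefficients s and t obtained from Cramer's rule; g2 is the resulting family.\<close>

locale dual_pair_step = compatible_norm +
  fixes I g i0 j
  assumes sp: "splitting I g" and cs: "depth_attained I g" and i0: "i0 \<in> I" and jI: "j \<in> I" and ji: "j \<noteq> i0"
    and Pn: "polar Q (g i0) (g j) \<noteq> 0" and Peq: "v (polar Q (g i0) (g j)) = \<alpha> (g i0) + \<alpha> (g j) + \<gamma>"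
begin

definition "x = g i0"
definition "\<beta> = polar Q x (g j)"
definition "y0 = vscale (inverse \<beta>) (g j)"
definition "I' = I - {i0, j}"
definition "gram_x = polar Q x x"
definition "gram_y0 = polar Q y0 y0"
definition "gram_det = gram_x * gram_y0 - 1"
definition "s i = (gram_y0 * polar Q (g i) x - polar Q (g i) y0) / gram_det" for i
definition "t i = (gram_x * polar Q (g i) y0 - polar Q (g i) x) / gram_det" for i
definition "g' i = vadd (g i) (vadd (vscale (- s i) x) (vscale (- t i) y0))" for i
definition "g2 i = (if i = i0 then x else if i = j then y0 else g' i)" for i

lemma finite_I: "finite I" using splitting_finite[OF sp] .
lemma g_vecs: "i \<in> I \<Longrightarrow> g i \<in> V" using splitting_vecs[OF sp] .
lemma g_nonzero: "i \<in> I \<Longrightarrow> g i \<noteq> vzero" using splitting_nonzero[OF sp] .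
lemma x_vecs: "x \<in> V" and x_nonzero: "x \<noteq> vzero" unfolding x_def using g_vecs[OF i0] g_nonzero[OF i0] by auto
lemma beta_nonzero: "\<beta> \<noteq> 0" unfolding \<beta>_def x_def using Pn .
lemma y0_vecs: "y0 \<in> V" unfolding y0_def using g_vecs[OF jI] by blast
lemma y0_nonzero: "y0 \<noteq> vzero" unfolding y0_def using vscale_nz[OF _ g_nonzero[OF jI]] beta_nonzero by simp
lemma polar_x_y0: "polar Q x y0 = 1" unfolding y0_def
  using polar_scale_right[OF g_vecs[OF jI] x_vecs] beta_nonzero by (simp add: \<beta>_def)
lemma polar_y0_x: "polar Q y0 x = 1" using polar_x_y0 polar_commute by metis
lemma norm_y0: "\<alpha> y0 = \<alpha> (g j) - v \<beta>"
  unfolding y0_def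
    using norm_scale[OF g_vecs[OF jI] g_nonzero[OF jI]] beta_nonzero val_inverse[OF val beta_nonzero] by simp
lemma norm_x_y0: "\<alpha> x + \<alpha> y0 + \<gamma> = 0"
  using norm_y0 Peq unfolding \<beta>_def x_def by (simp add: algebra_simps)
lemma gen_cond_x_y0: "gen_cond v \<gamma> (Q x) (Q y0)"
  by (rule gen_cond_of_dual_pair[OF x_vecs y0_vecs x_nonzero y0_nonzero norm_x_y0])
lemma gram_x_eq: "gram_x = 2 * Q x" unfolding gram_x_def using polar_diag[OF x_vecs] .
lemma gram_y0_eq: "gram_y0 = 2 * Q y0" unfolding gram_y0_def using polar_diag[OF y0_vecs] .
lemma gram_det_eq: "gram_det = 4 * Q x * Q y0 - 1"
  unfolding gram_det_def gram_x_eq gram_y0_eq by (simp add: algebra_simps)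

lemma gram_det_nonzero: "gram_det \<noteq> 0" and val_gram_det: "v gram_det = 0"
  unfolding gram_det_eq using gen_cond_disc_unit[OF gen_cond_x_y0] by auto

lemma I'_subset: "I' \<subseteq> I" unfolding I'_def by auto
lemma finite_I': "finite I'" using finite_I I'_subset finite_subset by blast
lemma I_decompose: "I = insert i0 (insert j I')" unfolding I'_def using i0 jI by auto
lemma i0_notin: "i0 \<notin> insert j I'" unfolding I'_def using ji by auto
lemma j_notin: "j \<notin> I'" unfolding I'_def by auto

lemma g'_vecs: "i \<in> I' \<Longrightarrow> g' i \<in> V" unfolding g'_def using g_vecs I'_subset x_vecs y0_vecs by blast

lemma polar_g': assumes i: "i \<in> I'" shows "polar Q (g' i) x = 0" "polar Q (g' i) y0 = 0"
proof -
  have gi: "g i \<in> V" using g_vecs I'_subset i by blast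
  have ex: "polar Q (g' i) x = polar Q (g i) x - s i * gram_x - t i"
    unfolding g'_def gram_x_def
    using polar_add_left[OF gi _ x_vecs, of "vadd (vscale (- s i) x) (vscale (- t i) y0)"]
      polar_add_left[OF vscale_vecs[OF x_vecs] vscale_vecs[OF y0_vecs] x_vecs, of "- s i" "- t i"]
      polar_scale_left[OF x_vecs x_vecs] polar_scale_left[OF y0_vecs x_vecs] polar_y0_x x_vecs y0_vecs
        by (auto simp: algebra_simps)
  have ey: "polar Q (g' i) y0 = polar Q (g i) y0 - s i - t i * gram_y0"
    unfolding g'_def gram_y0_def
    using polar_add_left[OF gi _ y0_vecs, of "vadd (vscale (- s i) x) (vscale (- t i) y0)"]
      polar_add_left[OF vscale_vecs[OF x_vecs] vscale_vecs[OF y0_vecs] y0_vecs, of "- s i" "- t i"]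
      polar_scale_left[OF x_vecs y0_vecs] polar_scale_left[OF y0_vecs y0_vecs] polar_x_y0 x_vecs y0_vecs
        by (auto simp: algebra_simps)
  show "polar Q (g' i) x = 0" unfolding ex s_def t_def using gram_det_nonzero
    by (simp add: field_simps gram_det_def; simp add: algebra_simps)
  show "polar Q (g' i) y0 = 0" unfolding ey s_def t_def using gram_det_nonzero
    by (simp add: field_simps gram_det_def; simp add: algebra_simps)
qed

lemma val_proj_coeffs: assumes i: "i \<in> I'"
  shows "val_ge v (\<alpha> (g i) - \<alpha> x) (s i)" "val_ge v (\<alpha> (g i) - \<alpha> y0) (t i)"
proof -
  have iI: "i \<in> I" using i I'_subset by blast
  have gi: "g i \<in> V" "g i \<noteq> vzero" using g_vecs[OF iI] g_nonzero[OF iI] by auto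
  have p: "val_ge v (\<alpha> (g i) + \<alpha> x + \<gamma>) (polar Q (g i) x)"
    unfolding val_ge_def using polar_bound[OF gi(1) x_vecs gi(2) x_nonzero] by blast
  have q: "val_ge v (\<alpha> (g i) + \<alpha> y0 + \<gamma>) (polar Q (g i) y0)"
    unfolding val_ge_def using polar_bound[OF gi(1) y0_vecs gi(2) y0_nonzero] by blast
  have qx: "val_ge v (\<alpha> x + \<alpha> x) (Q x)" unfolding val_ge_def using qform_bound[OF x_vecs x_nonzero] by blast
  have qy: "val_ge v (\<alpha> y0 + \<alpha> y0) (Q y0)" unfolding val_ge_def using qform_bound[OF y0_vecs y0_nonzero]
    by blast
  have g: "\<gamma> = - \<alpha> x - \<alpha> y0" using norm_x_y0 by (simp add: algebra_simps eq_neg_iff_add_eq_0)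
  have iD: "val_ge v 0 (inverse gram_det)" by (rule val_ge_inverse[OF val val_gram_det])
  have B: "val_ge v (\<gamma> + (\<alpha> y0 + \<alpha> y0)) gram_y0" unfolding gram_y0_eq
    by (rule val_ge_mult[OF val val_ge_two qy])
  have A: "val_ge v (\<gamma> + (\<alpha> x + \<alpha> x)) gram_x" unfolding gram_x_eq by (rule val_ge_mult[OF val val_ge_two qx])
  have s1: "val_ge v (\<alpha> (g i) - \<alpha> x) (gram_y0 * polar Q (g i) x - polar Q (g i) y0)"
    unfolding diff_conv_add_uminus[of "gram_y0 * polar Q (g i) x"]
    apply (rule val_ge_add[OF val])
     apply (rule val_ge_mono[OF order_eq_refl val_ge_mult[OF val B p]], simp add: g algebra_simps)
    by (rule val_ge_mono[OF order_eq_refl val_ge_neg[OF val q]], simp add: g algebra_simps)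
  show "val_ge v (\<alpha> (g i) - \<alpha> x) (s i)"
    unfolding s_def divide_inverse
    by (rule val_ge_mono[OF order_eq_refl val_ge_mult[OF val s1 iD]]) simp
  have t1: "val_ge v (\<alpha> (g i) - \<alpha> y0) (gram_x * polar Q (g i) y0 - polar Q (g i) x)"
    unfolding diff_conv_add_uminus[of "gram_x * polar Q (g i) y0"]
    apply (rule val_ge_add[OF val])
     apply (rule val_ge_mono[OF order_eq_refl val_ge_mult[OF val A q]], simp add: g algebra_simps)
    by (rule val_ge_mono[OF order_eq_refl val_ge_neg[OF val p]], simp add: g algebra_simps)
  show "val_ge v (\<alpha> (g i) - \<alpha> y0) (t i)"
    unfolding t_def divide_inverse
    by (rule val_ge_mono[OF order_eq_refl val_ge_mult[OF val t1 iD]]) simp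
qed

definition "g_coeffs c i = (if i = i0 then c i0 - (\<Sum>k\<in>I'. c k * s k)
   else if i = j then (c j - (\<Sum>k\<in>I'. c k * t k)) * inverse \<beta> else c i)" for c i
definition "g2_coeffs c i = (if i = i0 then c i0 + (\<Sum>k\<in>I'. c k * s k)
   else if i = j then \<beta> * c j + (\<Sum>k\<in>I'. c k * t k) else c i)" for c i

lemma g2_i0: "g2 i0 = x" unfolding g2_def by simp
lemma g2_j: "g2 j = y0" unfolding g2_def using ji by simp
lemma g2_I': "k \<in> I' \<Longrightarrow> g2 k = g' k" unfolding g2_def I'_def by auto

lemma sum_I_decompose: "(\<Sum>i\<in>I. f i) = f i0 + (f j + (\<Sum>k\<in>I'. f k))"
proof -
  have "(\<Sum>i\<in>I. f i) = (\<Sum>i\<in>insert i0 (insert j I'). f i)" using I_decompose by simp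
  also have "\<dots> = f i0 + (f j + (\<Sum>k\<in>I'. f k))" using i0_notin j_notin finite_I' by simp
  finally show ?thesis .
qed

lemma lincomb_g2_split: "lincomb I c g2 = vadd (vscale (c i0) x) (vadd (vscale (c j) y0) (lincomb I' c g'))"
proof (rule ext)
  fix m
  have e: "(\<Sum>k\<in>I'. c k * g2 k m) = (\<Sum>k\<in>I'. c k * g' k m)" by (rule sum.cong) (simp_all add: g2_I')
  show "lincomb I c g2 m = vadd (vscale (c i0) x) (vadd (vscale (c j) y0) (lincomb I' c g')) m"
    unfolding lincomb_def sum_I_decompose[of "\<lambda>i. c i * g2 i m"] e
    by (simp add: g2_i0 g2_j vadd_def vscale_def)
qed

lemma lincomb_g2: "lincomb I c g2 = lincomb I (g_coeffs c) g"
proof (rule ext)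
  fix m
  have cfi0: "g_coeffs c i0 = c i0 - (\<Sum>k\<in>I'. c k * s k)" unfolding g_coeffs_def by simp
  have cfj: "g_coeffs c j = (c j - (\<Sum>k\<in>I'. c k * t k)) * inverse \<beta>" unfolding g_coeffs_def using ji by simp
  have cfk: "\<And>k. k \<in> I' \<Longrightarrow> g_coeffs c k = c k" unfolding g_coeffs_def I'_def by auto
  have ym: "y0 m = inverse \<beta> * g j m" unfolding y0_def vscale_def by simp
  have s1: "(\<Sum>k\<in>I'. c k * g' k m)
      = (\<Sum>k\<in>I'. c k * g k m) - (\<Sum>k\<in>I'. c k * s k) * x m - (\<Sum>k\<in>I'. c k * t k) * y0 m"
    unfolding g'_def vadd_def vscale_def
    by (simp add: algebra_simps sum.distrib sum_subtractf sum_distrib_right sum_distrib_left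
        mult.left_commute)
  have s2: "(\<Sum>k\<in>I'. g_coeffs c k * g k m) = (\<Sum>k\<in>I'. c k * g k m)" using cfk by simp
  have gj: "g j m = \<beta> * y0 m" unfolding ym using beta_nonzero by simp
  have c2: "(c j - (\<Sum>k\<in>I'. c k * t k)) * inverse \<beta> * (\<beta> * y0 m) = (c j - (\<Sum>k\<in>I'. c k * t k)) * y0 m"
    using beta_nonzero by simp
  have "lincomb I c g2 m = c i0 * x m + (c j * y0 m + (\<Sum>k\<in>I'. c k * g' k m))"
    unfolding lincomb_def sum_I_decompose[of "\<lambda>i. c i * g2 i m"]
    using g2_I' by (simp add: g2_i0 g2_j)
  also have "\<dots> = (c i0 - (\<Sum>k\<in>I'. c k * s k)) * x m + ((c j - (\<Sum>k\<in>I'. c k * t k)) * y0 m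
      + (\<Sum>k\<in>I'. c k * g k m))"
    unfolding s1 by (simp add: algebra_simps)
  also have "\<dots> = lincomb I (g_coeffs c) g m"
    unfolding lincomb_def sum_I_decompose[of "\<lambda>i. g_coeffs c i * g i m"] s2 cfi0 cfj gj c2
        by (simp add: x_def)
  finally show "lincomb I c g2 m = lincomb I (g_coeffs c) g m" .
qed

lemma g_coeffs_g2_coeffs: "i \<in> I \<Longrightarrow> g_coeffs (g2_coeffs c) i = c i"
proof -
  assume i: "i \<in> I"
  have cbk: "\<And>k. k \<in> I' \<Longrightarrow> g2_coeffs c k = c k" unfolding g2_coeffs_def I'_def by auto
  have s: "(\<Sum>k\<in>I'. g2_coeffs c k * s k) = (\<Sum>k\<in>I'. c k * s k)"
    "(\<Sum>k\<in>I'. g2_coeffs c k * t k) = (\<Sum>k\<in>I'. c k * t k)"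
    using cbk by simp_all
  show ?thesis using i beta_nonzero ji unfolding g_coeffs_def s unfolding g2_coeffs_def I'_def by auto
qed

lemma lincomb_g: "lincomb I c g = lincomb I (g2_coeffs c) g2"
  unfolding lincomb_g2 by (rule lincomb_cong) (simp add: g_coeffs_g2_coeffs)

lemma g2_vecs: "i \<in> I \<Longrightarrow> g2 i \<in> V"
  unfolding g2_def using x_vecs y0_vecs g'_vecs unfolding I'_def by auto

definition "g'_coeffs i k = (if k = i then 1 else if k = i0 then - s i
    else if k = j then - t i * inverse \<beta> else 0)" for i k

lemma g'_lincomb:
  assumes i: "i \<in> I'"
  shows "g' i = lincomb I (g'_coeffs i) g"
proof (rule ext)
  fix m
  have iI: "i \<noteq> i0" "i \<noteq> j" "i \<in> I" using i unfolding I'_def by auto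
  have "lincomb I (g'_coeffs i) g m = (\<Sum>k\<in>I. (if k = i then g i m else 0) +
      ((if k = i0 then - s i * g i0 m else 0) + (if k = j then - t i * inverse \<beta> * g j m else 0)))"
    unfolding lincomb_def g'_coeffs_def by (rule sum.cong) (use iI ji in auto)
  also have "\<dots> = g i m + (- s i * g i0 m + - t i * inverse \<beta> * g j m)"
    using finite_I iI i0 jI by (simp add: sum.distrib)
  finally show "g' i m = lincomb I (g'_coeffs i) g m"
    unfolding g'_def vadd_def vscale_def y0_def x_def by (simp add: algebra_simps)
qed

lemma g'_nonzero_norm_ge:
  assumes i: "i \<in> I'"
  shows "g' i \<noteq> vzero" "\<alpha> (g i) \<le> \<alpha> (g' i)"
proof -
  define e where "e = g'_coeffs i"
  have iI: "i \<noteq> i0" "i \<noteq> j" "i \<in> I" using i unfolding I'_def by auto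
  have ge: "g' i = lincomb I e g" unfolding e_def by (rule g'_lincomb[OF i])
  have "e i \<noteq> 0" unfolding e_def g'_coeffs_def by simp
  then have "\<exists>k\<in>I. e k \<noteq> 0" using iI by blast
  then have "lincomb I e g \<noteq> vzero" using sp unfolding splitting_def by blast
  then show nz: "g' i \<noteq> vzero" unfolding ge .
  show "\<alpha> (g i) \<le> \<alpha> (g' i)" unfolding ge
  proof (rule norm_lincomb_ge[OF finite_I g_vecs g_nonzero])
    show "lincomb I e g \<noteq> vzero" using nz ge by simp
    fix k assume k: "k \<in> I" "e k \<noteq> 0"
    consider "k = i" | "k = i0" "k \<noteq> i" | "k = j" "k \<noteq> i" "k \<noteq> i0" | "k \<noteq> i" "k \<noteq> i0" "k \<noteq> j" by blast
    then show "\<alpha> (g i) \<le> v (e k) + \<alpha> (g k)"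
    proof cases
      case 1 then show ?thesis unfolding e_def g'_coeffs_def using val_one[OF val] by simp
    next
      case 2
      then have ek: "e k = - s i" "s i \<noteq> 0" using k(2) unfolding e_def g'_coeffs_def by auto
      have "\<alpha> (g i) - \<alpha> x \<le> v (s i)" using val_proj_coeffs(1)[OF i] ek(2) unfolding val_ge_def by blast
      then show ?thesis using ek 2 val_neg[OF val] unfolding x_def by (simp add: diff_le_eq)
    next
      case 3
      then have ek: "e k = - t i * inverse \<beta>" "t i \<noteq> 0" using k(2) unfolding e_def g'_coeffs_def by auto
      have h: "\<alpha> (g i) - \<alpha> y0 \<le> v (t i)" using val_proj_coeffs(2)[OF i] ek(2) unfolding val_ge_def by blast
      have ve: "v (e k) = v (t i) - v \<beta>" unfolding ek(1)
        using val_neg[OF val] val_mult[OF val] val_inverse[OF val beta_nonzero] ek(2) beta_nonzero by simp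
      have ag: "\<alpha> (g j) = \<alpha> y0 + v \<beta>" using norm_y0 by simp
      have "\<alpha> (g i) \<le> v (e k) + \<alpha> (g j)"
        by (rule le_by_gaps1[OF h]) (simp add: ve ag algebra_simps)
      then show ?thesis using 3 by simp
    next
      case 4 then show ?thesis using k(2) unfolding e_def g'_coeffs_def by simp
    qed
  qed
qed

lemma g_coeffs_nonzero: assumes "\<exists>i\<in>I. c i \<noteq> 0" shows "\<exists>i\<in>I. g_coeffs c i \<noteq> 0"
proof (cases "\<exists>k\<in>I'. c k \<noteq> 0")
  case True
  then obtain k where k: "k \<in> I'" "c k \<noteq> 0" by blast
  then have "g_coeffs c k = c k" "k \<in> I" unfolding g_coeffs_def I'_def by auto
  then show ?thesis using k by (intro bexI[of _ k]) auto
next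
  case False
  then have z: "(\<Sum>k\<in>I'. c k * s k) = 0" "(\<Sum>k\<in>I'. c k * t k) = 0" by auto
  have e: "g_coeffs c i0 = c i0" "g_coeffs c j = c j * inverse \<beta>" unfolding g_coeffs_def z using ji by auto
  from assms obtain i where i: "i \<in> I" "c i \<noteq> 0" by blast
  then have "i = i0 \<or> i = j" using False unfolding I'_def by blast
  then show ?thesis
  proof
    assume "i = i0" then have "g_coeffs c i0 \<noteq> 0" using e i by simp
    then show ?thesis using i0 by blast
  next
    assume "i = j" then have "g_coeffs c j \<noteq> 0" using e i beta_nonzero by simp
    then show ?thesis using jI by blast
  qed
qed

text \<open>The norm of a combination of the new family is bounded by each of its terms: for the
  old vectors this is the splitting property of g, and at x (resp. y0) the correction terms
  coming from the projections have strictly larger value, so they do not change the coefficient's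
  valuation.\<close>

lemma norm_le_at_x:
  assumes hz: "\<And>k. k \<in> I \<Longrightarrow> g_coeffs c k \<noteq> 0 \<Longrightarrow> \<alpha> z \<le> v (g_coeffs c k) + \<alpha> (g k)"
    and hz': "\<And>k. k \<in> I' \<Longrightarrow> c k \<noteq> 0 \<Longrightarrow> \<alpha> z \<le> v (c k) + \<alpha> (g k)"
    and ci0: "c i0 \<noteq> 0"
  shows "\<alpha> z \<le> v (c i0) + \<alpha> x"
proof (rule ccontr)
  assume "\<not> ?thesis"
  then have lt: "v (c i0) + \<alpha> x < \<alpha> z" by simp
  have "(\<Sum>k\<in>I'. c k * s k) \<noteq> 0 \<Longrightarrow> v (c i0) < v (\<Sum>k\<in>I'. c k * s k)"
  proof (rule val_sum_gt[OF val finite_I'])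
    fix k assume k: "k \<in> I'" "c k * s k \<noteq> 0"
    then have nz: "c k \<noteq> 0" "s k \<noteq> 0" by auto
    have "\<alpha> (g k) - \<alpha> x \<le> v (s k)" using val_proj_coeffs(1)[OF k(1)] nz(2) unfolding val_ge_def by blast
    then show "v (c i0) < v (c k * s k)" unfolding val_mult[OF val nz]
      by (rule less_by_gaps3[OF lt hz'[OF k(1) nz(1)]]) (simp add: algebra_simps)
  qed
  from val_diff_dominant[OF val ci0 this]
  have "g_coeffs c i0 \<noteq> 0" "v (g_coeffs c i0) = v (c i0)" unfolding g_coeffs_def by auto
  then have "\<alpha> z \<le> v (c i0) + \<alpha> x" using hz[OF i0] unfolding x_def by simp
  then show False using lt by simp
qed

lemma norm_le_at_y0:
  assumes hz: "\<And>k. k \<in> I \<Longrightarrow> g_coeffs c k \<noteq> 0 \<Longrightarrow> \<alpha> z \<le> v (g_coeffs c k) + \<alpha> (g k)"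
    and hz': "\<And>k. k \<in> I' \<Longrightarrow> c k \<noteq> 0 \<Longrightarrow> \<alpha> z \<le> v (c k) + \<alpha> (g k)"
    and cj: "c j \<noteq> 0"
  shows "\<alpha> z \<le> v (c j) + \<alpha> y0"
proof (rule ccontr)
  assume "\<not> ?thesis"
  then have lt: "v (c j) + \<alpha> y0 < \<alpha> z" by simp
  have "(\<Sum>k\<in>I'. c k * t k) \<noteq> 0 \<Longrightarrow> v (c j) < v (\<Sum>k\<in>I'. c k * t k)"
  proof (rule val_sum_gt[OF val finite_I'])
    fix k assume k: "k \<in> I'" "c k * t k \<noteq> 0"
    then have nz: "c k \<noteq> 0" "t k \<noteq> 0" by auto
    have "\<alpha> (g k) - \<alpha> y0 \<le> v (t k)" using val_proj_coeffs(2)[OF k(1)] nz(2) unfolding val_ge_def by blast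
    then show "v (c j) < v (c k * t k)" unfolding val_mult[OF val nz]
      by (rule less_by_gaps3[OF lt hz'[OF k(1) nz(1)]]) (simp add: algebra_simps)
  qed
  from val_diff_dominant[OF val cj this]
  have d0: "c j - (\<Sum>k\<in>I'. c k * t k) \<noteq> 0" "v (c j - (\<Sum>k\<in>I'. c k * t k)) = v (c j)" by auto
  have cfj: "g_coeffs c j = (c j - (\<Sum>k\<in>I'. c k * t k)) * inverse \<beta>" unfolding g_coeffs_def using ji by simp
  have "inverse \<beta> \<noteq> 0" using beta_nonzero by simp
  then have d: "g_coeffs c j \<noteq> 0" "v (g_coeffs c j) = v (c j) - v \<beta>"
    unfolding cfj using d0 val_mult[OF val d0(1)] val_inverse[OF val beta_nonzero] by auto
  have "\<alpha> z \<le> v (g_coeffs c j) + \<alpha> (g j)" using hz[OF jI d(1)] .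
  also have "\<dots> = v (c j) + \<alpha> y0" unfolding d(2) norm_y0 by (simp add: algebra_simps)
  finally show False using lt by simp
qed

lemma splitting_g2: "splitting I g2"
  unfolding splitting_def
proof (intro conjI allI impI ballI)
  show "finite I" by (rule finite_I)
  show "\<And>i. i \<in> I \<Longrightarrow> g2 i \<in> V" by (rule g2_vecs)
  fix c :: "nat \<Rightarrow> 'a" assume c: "\<exists>i\<in>I. c i \<noteq> 0"
  define z where "z = lincomb I c g2"
  have zc: "z = lincomb I (g_coeffs c) g" unfolding z_def by (rule lincomb_g2)
  show "lincomb I c g2 \<noteq> vzero" using splitting_lincomb_nonzero[OF sp g_coeffs_nonzero[OF c]] zc z_def by simp
  have hz: "\<And>k. k \<in> I \<Longrightarrow> g_coeffs c k \<noteq> 0 \<Longrightarrow> \<alpha> z \<le> v (g_coeffs c k) + \<alpha> (g k)"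
    unfolding zc by (rule splitting_norm_le[OF sp])
  have hz': "\<alpha> z \<le> v (c k) + \<alpha> (g k)" if "k \<in> I'" "c k \<noteq> 0" for k
    using hz[of k] that unfolding g_coeffs_def I'_def by auto
  fix i assume i: "i \<in> I" "c i \<noteq> 0"
  consider "i \<in> I'" | "i = i0" | "i = j" using i unfolding I'_def by blast
  then show "\<alpha> (lincomb I c g2) \<le> v (c i) + \<alpha> (g2 i)"
  proof cases
    case 1
    have "\<alpha> z \<le> v (c i) + \<alpha> (g i)" by (rule hz'[OF 1 i(2)])
    also have "\<dots> \<le> v (c i) + \<alpha> (g' i)" using g'_nonzero_norm_ge(2)[OF 1] by (rule add_left_mono)
    finally show ?thesis using g2_I'[OF 1] z_def by simp
  next
    case 2
    then show ?thesis using norm_le_at_x[OF hz hz'] i g2_i0 z_def by simp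
  next
    case 3
    then show ?thesis using norm_le_at_y0[OF hz hz'] i g2_j z_def by simp
  qed
qed

lemma splitting_g': "splitting I' g'"
  by (rule splitting_cong[OF splitting_subset[OF splitting_g2 I'_subset]]) (simp add: g2_I')

lemma polar_span_g': assumes "z \<in> span I' g'" shows "polar Q z x = 0" "polar Q z y0 = 0"
proof -
  obtain d where d: "z = lincomb I' d g'" using assms unfolding span_def by blast
  have "polar Q (lincomb I' d g') x = (\<Sum>i\<in>I'. d i * polar Q (g' i) x)"
    by (rule polar_lincomb_left) (use finite_I' g'_vecs x_vecs in auto)
  then show "polar Q z x = 0" unfolding d using polar_g'(1) by simp
  have "polar Q (lincomb I' d g') y0 = (\<Sum>i\<in>I'. d i * polar Q (g' i) y0)"
    by (rule polar_lincomb_left) (use finite_I' g'_vecs y0_vecs in auto)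
  then show "polar Q z y0 = 0" unfolding d using polar_g'(2) by simp
qed

lemma span_g'_subset: "span I' g' \<subseteq> span I g"
proof
  fix z assume "z \<in> span I' g'"
  then obtain d where d: "z = lincomb I' d g'" unfolding span_def by blast
  define d0 where "d0 k = (if k = i0 \<or> k = j then 0 else d k)" for k
  have "lincomb I' d0 g' = lincomb I' d g'"
      by (rule lincomb_cong) (use j_notin i0_notin in \<open>auto simp: d0_def\<close>)
  then have "lincomb I d0 g2 = z" unfolding lincomb_g2_split d using d0_def by simp
  then have "z = lincomb I (g_coeffs d0) g" using lincomb_g2 by simp
  then show "z \<in> span I g" using lincomb_in_span by simp
qed

lemma x_in_span: "x \<in> span I g" unfolding x_def by (rule member_in_span[OF finite_I i0])
lemma y0_in_span: "y0 \<in> span I g"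
proof -
  have "lincomb I (\<lambda>k. if k = j then inverse \<beta> else 0) g = y0"
  proof (rule ext)
    fix m
    have "lincomb I (\<lambda>k. if k = j then inverse \<beta> else 0) g m = (\<Sum>k\<in>I. if k = j then inverse \<beta> * g k m else 0)"
      unfolding lincomb_def by (rule sum.cong) auto
    then show "lincomb I (\<lambda>k. if k = j then inverse \<beta> else 0) g m = y0 m"
      using finite_I jI unfolding y0_def vscale_def by simp
  qed
  then show ?thesis using lincomb_in_span[of I "\<lambda>k. if k = j then inverse \<beta> else 0" g] by simp
qed

lemma span_decompose: assumes "z \<in> span I g"
  shows "\<exists>p q w. w \<in> span I' g' \<and> z = vadd (vscale p x) (vadd (vscale q y0) w)"
proof -
  obtain e where e: "z = lincomb I e g" using assms unfolding span_def by blast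
  have "z = lincomb I (g2_coeffs e) g2" unfolding e by (rule lincomb_g)
  then have "z = vadd (vscale (g2_coeffs e i0) x)
      (vadd (vscale (g2_coeffs e j) y0) (lincomb I' (g2_coeffs e) g'))"
    using lincomb_g2_split by simp
  then show ?thesis using lincomb_in_span[of I' "g2_coeffs e" g'] by blast
qed

lemma depth_attained_g': "depth_attained I' g'"
  unfolding depth_attained_def
proof (intro ballI impI)
  fix x' assume x': "x' \<in> span I' g'" "x' \<noteq> vzero"
  have x'V: "x' \<in> V" using span_vecs[OF splitting_g' x'(1)] .
  have "x' \<in> span I g" using span_g'_subset x'(1) by blast
  then obtain y where y: "y \<in> span I g" "y \<noteq> vzero" "polar Q x' y \<noteq> 0" "v (polar Q x' y) = \<alpha> x' + \<alpha> y + \<gamma>"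
    using cs x'(2) unfolding depth_attained_def by blast
  obtain e where e: "y = lincomb I e g" using y(1) unfolding span_def by blast
  define w where "w = lincomb I' (g2_coeffs e) g'"
  have yw: "y = vadd (vscale (g2_coeffs e i0) x) (vadd (vscale (g2_coeffs e j) y0) w)"
    unfolding w_def e lincomb_g lincomb_g2_split ..
  have wV: "w \<in> V" unfolding w_def using lincomb_vecs[of I' g' n "g2_coeffs e", OF finite_I' g'_vecs] by blast
  have px: "polar Q x' x = 0" "polar Q x' y0 = 0" using polar_span_g'[OF x'(1)] by auto
  have pw: "polar Q x' y = polar Q x' w"
    unfolding yw using polar_add_right[OF vscale_vecs[OF x_vecs] vadd_vecs[OF vscale_vecs[OF y0_vecs] wV] x'V]
      polar_add_right[OF vscale_vecs[OF y0_vecs] wV x'V] polar_scale_right[OF x_vecs x'V]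
          polar_scale_right[OF y0_vecs x'V] px by simp
  have wn: "w \<noteq> vzero" using y(3) pw polar_zero_right[OF x'V] by auto
  have ayw: "\<alpha> y \<le> \<alpha> w"
    unfolding w_def
  proof (rule norm_lincomb_ge[of I' g', OF finite_I' g'_vecs])
    show "\<And>i. i \<in> I' \<Longrightarrow> g' i \<noteq> vzero" using g'_nonzero_norm_ge(1) by blast
    show "lincomb I' (g2_coeffs e) g' \<noteq> vzero" using wn w_def by simp
    fix k assume k: "k \<in> I'" "g2_coeffs e k \<noteq> 0"
    have yy: "y = lincomb I (g2_coeffs e) g2" unfolding e by (rule lincomb_g)
    have "k \<in> I" using k I'_subset by blast
    have "\<alpha> y \<le> v (g2_coeffs e k) + \<alpha> (g2 k)" unfolding yy
      by (rule splitting_norm_le[of I g2 k "g2_coeffs e", OF splitting_g2 \<open>k \<in> I\<close> k(2)])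
    then show "\<alpha> y \<le> v (g2_coeffs e k) + \<alpha> (g' k)" using g2_I'[OF k(1)] by simp
  qed
  have lo: "\<alpha> x' + \<alpha> w + \<gamma> \<le> v (polar Q x' w)" using polar_bound[OF x'V wV x'(2) wn] y(3) pw by simp
  have "v (polar Q x' w) \<le> \<alpha> x' + \<alpha> w + \<gamma>" using y(4) pw ayw by (simp add: add_right_mono add_left_mono)
  then have "v (polar Q x' w) = \<alpha> x' + \<alpha> w + \<gamma>" using lo by simp
  moreover have "w \<in> span I' g'" unfolding w_def by (rule lincomb_in_span)
  ultimately show "\<exists>y\<in>span I' g'. y \<noteq> vzero \<and> polar Q x' y \<noteq> 0 \<and> v (polar Q x' y) = \<alpha> x' + \<alpha> y + \<gamma>"
    using wn y(3) pw by auto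
qed

lemma card_I': "card I' = card I - 2"
  unfolding I'_def using finite_I i0 jI ji by (simp add: card_Diff_subset)

end

definition pair_vec :: "((nat \<Rightarrow> 'a) \<times> (nat \<Rightarrow> 'a)) list \<Rightarrow> nat \<Rightarrow> nat \<Rightarrow> 'a" where
  "pair_vec H i = (if even i then fst (H ! (i div 2)) else snd (H ! (i div 2)))"

lemma pair_vec_0[simp]: "pair_vec ((a, b) # H) 0 = a"
  and pair_vec_1[simp]: "pair_vec ((a, b) # H) (Suc 0) = b"
  and pair_vec_Suc_Suc[simp]: "pair_vec ((a, b) # H) (Suc (Suc i)) = pair_vec H i"
  by (simp_all add: pair_vec_def)

lemma lincomb_pair_vec_Cons:
  "lincomb {..<2 * length ((a, b) # H)} c (pair_vec ((a, b) # H)) =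
   vadd (vscale (c 0) a) (vadd (vscale (c 1) b) (lincomb {..<2 * length H} (\<lambda>i. c (Suc (Suc i)))
       (pair_vec H)))"
proof -
  have e: "2 * length ((a, b) # H) = Suc (Suc (2 * length H))" by simp
  show ?thesis unfolding lincomb_def e sum.lessThan_Suc_shift by (simp add: vadd_def vscale_def fun_eq_iff)
qed

context compatible_norm begin

definition hyperbolic_basis :: "((nat \<Rightarrow> 'a) \<times> (nat \<Rightarrow> 'a)) list \<Rightarrow> nat set \<Rightarrow> (nat \<Rightarrow> nat \<Rightarrow> 'a) \<Rightarrow> bool" where
  "hyperbolic_basis H I g \<longleftrightarrow>
    (\<forall>k<length H. fst (H!k) \<in> V \<and> snd (H!k) \<in> V \<and> polar Q (fst (H!k)) (snd (H!k)) = 1 \<and>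
        gen_cond v \<gamma> (Q (fst (H!k))) (Q (snd (H!k)))) \<and>
    (\<forall>i<2 * length H. \<forall>i'<2 * length H. i div 2 \<noteq> i' div 2 \<longrightarrow> polar Q (pair_vec H i) (pair_vec H i') = 0) \<and>
    (\<forall>i<2 * length H. pair_vec H i \<in> span I g) \<and>
    span I g \<subseteq> span {..<2 * length H} (pair_vec H) \<and>
    2 * length H = card I"

end

context dual_pair_step begin

lemma pair_vec_Cons_cases:
  assumes "i < 2 * length ((x, y0) # H)"
  shows "(i = 0 \<and> pair_vec ((x, y0) # H) i = x) \<or> (i = 1 \<and> pair_vec ((x, y0) # H) i = y0) \<or>
    (\<exists>i'. i = Suc (Suc i') \<and> i' < 2 * length H \<and> pair_vec ((x, y0) # H) i = pair_vec H i')"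
proof -
  consider "i = 0" | "i = 1" | i' where "i = Suc (Suc i')" by (metis One_nat_def not0_implies_Suc)
  then show ?thesis by cases (use assms in auto)
qed

lemma pair_vec_Cons_in_span:
  assumes "\<And>i. i < 2 * length H \<Longrightarrow> pair_vec H i \<in> span I' g'" "i < 2 * length ((x, y0) # H)"
  shows "pair_vec ((x, y0) # H) i \<in> span I g"
proof -
  consider "pair_vec ((x, y0) # H) i = x" | "pair_vec ((x, y0) # H) i = y0"
    | i' where "i' < 2 * length H" "pair_vec ((x, y0) # H) i = pair_vec H i'"
    using pair_vec_Cons_cases[OF assms(2)] by blast
  then show ?thesis
  proof cases
    case 3
    then show ?thesis using subsetD[OF span_g'_subset assms(1)[OF 3(1)]] by simp
  qed (simp_all add: x_in_span y0_in_span)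
qed

lemma pair_vec_Cons_orthogonal:
  assumes orth: "\<And>i i'. i < 2 * length H \<Longrightarrow> i' < 2 * length H \<Longrightarrow> i div 2 \<noteq> i' div 2 \<Longrightarrow>
      polar Q (pair_vec H i) (pair_vec H i') = 0"
    and span: "\<And>i. i < 2 * length H \<Longrightarrow> pair_vec H i \<in> span I' g'"
    and i: "i < 2 * length ((x, y0) # H)" "i' < 2 * length ((x, y0) # H)" "i div 2 \<noteq> i' div 2"
  shows "polar Q (pair_vec ((x, y0) # H) i) (pair_vec ((x, y0) # H) i') = 0"
proof -
  have new_orth: "polar Q z (pair_vec H k) = 0 \<and> polar Q (pair_vec H k) z = 0"
    if "z = x \<or> z = y0" "k < 2 * length H" for z k
  proof -
    have "polar Q (pair_vec H k) x = 0" "polar Q (pair_vec H k) y0 = 0"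
      using polar_span_g'[OF span[OF that(2)]] by auto
    then show ?thesis using that(1) polar_commute by metis
  qed
  show ?thesis
    using pair_vec_Cons_cases[OF i(1)] pair_vec_Cons_cases[OF i(2)]
    by (elim disjE exE conjE) (use i(3) new_orth orth in auto)
qed

lemma span_subset_pair_vec_Cons:
  assumes "span I' g' \<subseteq> span {..<2 * length H} (pair_vec H)"
  shows "span I g \<subseteq> span {..<2 * length ((x, y0) # H)} (pair_vec ((x, y0) # H))"
proof
  fix z assume "z \<in> span I g"
  then obtain p q w where w: "w \<in> span I' g'" "z = vadd (vscale p x) (vadd (vscale q y0) w)"
    using span_decompose by blast
  obtain c where c: "w = lincomb {..<2 * length H} c (pair_vec H)"
    using w(1) assms unfolding span_def by blast
  define c2 where "c2 i = (if i = 0 then p else if i = 1 then q else c (i - 2))" for i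
  have "lincomb {..<2 * length ((x, y0) # H)} c2 (pair_vec ((x, y0) # H)) = z"
    unfolding lincomb_pair_vec_Cons w(2) c by (simp add: c2_def)
  then show "z \<in> span {..<2 * length ((x, y0) # H)} (pair_vec ((x, y0) # H))"
    using lincomb_in_span[of "{..<2 * length ((x, y0) # H)}" c2 "pair_vec ((x, y0) # H)"] by simp
qed

lemma hyperbolic_basis_Cons:
  assumes H: "hyperbolic_basis H I' g'"
  shows "hyperbolic_basis ((x, y0) # H) I g"
proof -
  let ?H = "(x, y0) # H"
  have G1: "\<forall>k<length H. fst (H!k) \<in> V \<and> snd (H!k) \<in> V \<and> polar Q (fst (H!k)) (snd (H!k)) = 1 \<and>
      gen_cond v \<gamma> (Q (fst (H!k))) (Q (snd (H!k)))"
    and G2: "\<And>i i'. i < 2 * length H \<Longrightarrow> i' < 2 * length H \<Longrightarrow> i div 2 \<noteq> i' div 2 \<Longrightarrow>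
      polar Q (pair_vec H i) (pair_vec H i') = 0"
    and G3: "\<And>i. i < 2 * length H \<Longrightarrow> pair_vec H i \<in> span I' g'"
    and G4: "span I' g' \<subseteq> span {..<2 * length H} (pair_vec H)"
    and G5: "2 * length H = card I'"
    using H unfolding hyperbolic_basis_def by blast+
  have "\<forall>k<length ?H. fst (?H!k) \<in> V \<and> snd (?H!k) \<in> V \<and> polar Q (fst (?H!k)) (snd (?H!k)) = 1 \<and>
      gen_cond v \<gamma> (Q (fst (?H!k))) (Q (snd (?H!k)))"
  proof (intro allI impI)
    fix k assume "k < length ?H"
    then show "fst (?H!k) \<in> V \<and> snd (?H!k) \<in> V \<and> polar Q (fst (?H!k)) (snd (?H!k)) = 1 \<and>
      gen_cond v \<gamma> (Q (fst (?H!k))) (Q (snd (?H!k)))"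
      using G1 x_vecs y0_vecs polar_x_y0 gen_cond_x_y0 by (cases k) simp_all
  qed
  moreover have "2 * length ?H = card I"
  proof -
    have "card {i0, j} \<le> card I" by (rule card_mono[OF finite_I]) (use i0 jI in auto)
    then show ?thesis using G5 card_I' ji by simp
  qed
  ultimately show ?thesis
    unfolding hyperbolic_basis_def
    using pair_vec_Cons_in_span[OF G3] pair_vec_Cons_orthogonal[OF G2 G3] span_subset_pair_vec_Cons[OF G4]
    by blast
qed

end

context compatible_norm begin

lemma hyperbolic_basis_exists: "splitting I g \<Longrightarrow> depth_attained I g \<Longrightarrow> \<exists>H. hyperbolic_basis H I g"
proof (induction "card I" arbitrary: I g rule: less_induct)
  case less
  show ?case
  proof (cases "I = {}")
    case True
    then have "hyperbolic_basis [] I g" by (simp add: hyperbolic_basis_def span_def)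
    then show ?thesis by blast
  next
    case False
    then obtain i0 where i0: "i0 \<in> I" by blast
    obtain j where j: "j \<in> I" "j \<noteq> i0" "polar Q (g i0) (g j) \<noteq> 0"
      "v (polar Q (g i0) (g j)) = \<alpha> (g i0) + \<alpha> (g j) + \<gamma>"
      using exists_dual_partner[OF less.prems i0] by blast
    interpret st: dual_pair_step v \<gamma> n Q \<alpha> I g i0 j
      by unfold_locales (use less.prems i0 j in auto)
    have "card st.I' < card I" using st.card_I' st.finite_I i0 False by (simp add: card_gt_0_iff)
    then obtain H where "hyperbolic_basis H st.I' st.g'"
      using less.hyps st.splitting_g' st.depth_attained_g' by blast
    then show ?thesis using st.hyperbolic_basis_Cons by blast
  qed
qed

end

definition pair_values :: "((nat \<Rightarrow> 'a::field) \<Rightarrow> 'a) \<Rightarrow> ((nat \<Rightarrow> 'a) \<times> (nat \<Rightarrow> 'a)) list \<Rightarrow> ('a \<times> 'a) list" where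
  "pair_values Q H = map (\<lambda>p. (Q (fst p), Q (snd p))) H"

lemma sum_binQ_Cons: "sum_binQ ((a,b)#L) c = binq a b (c 0) (c 1) + sum_binQ L (\<lambda>i. c (Suc (Suc i)))"
  unfolding sum_binQ_def by (simp add: sum.lessThan_Suc_shift del: sum.lessThan_Suc)

context qform begin

lemma polar_lincomb_orthogonal:
  assumes "finite I" "\<And>i. i \<in> I \<Longrightarrow> g i \<in> V" "a \<in> V" "\<And>i. i \<in> I \<Longrightarrow> polar Q a (g i) = 0"
  shows "polar Q a (lincomb I c g) = 0"
  using polar_lincomb_right[OF assms(1-3)] assms(4) by simp

lemma Q_dual_pair_orthogonal:
  assumes "a \<in> V" "b \<in> V" "W \<in> V" "polar Q a b = 1" "polar Q a W = 0" "polar Q b W = 0"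
  shows "Q (vadd (vscale s a) (vadd (vscale t b) W)) = binq (Q a) (Q b) s t + Q W"
proof -
  have sab: "vscale s a \<in> V" "vscale t b \<in> V" using assms by auto
  have "polar Q (vscale s a) (vadd (vscale t b) W) = s * t"
    using polar_add_right[OF sab(2) assms(3) sab(1)] polar_scale_left[OF assms(1) sab(2)]
      polar_scale_right[OF assms(2,1)] polar_scale_left[OF assms(1,3)] assms(4,5) by simp
  moreover have "polar Q (vscale t b) W = 0" using polar_scale_left[OF assms(2,3)] assms(6) by simp
  ultimately show ?thesis
    unfolding Q_vadd[of "vscale s a"] Q_vadd[of "vscale t b"] Q_scale[OF assms(1)] Q_scale[OF assms(2)]
    by (simp add: binq_def algebra_simps)
qed

lemma Q_lincomb_pair_vec:
  assumes "\<forall>k<length H. fst (H!k) \<in> V \<and> snd (H!k) \<in> V \<and> polar Q (fst (H!k)) (snd (H!k)) = 1"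
    and "\<forall>i<2 * length H. \<forall>i'<2 * length H. i div 2 \<noteq> i' div 2 \<longrightarrow>
      polar Q (pair_vec H i) (pair_vec H i') = 0"
  shows "Q (lincomb {..<2 * length H} c (pair_vec H)) = sum_binQ (pair_values Q H) c"
  using assms
proof (induction H arbitrary: c)
  case Nil then show ?case by (simp add: Q_zero sum_binQ_def pair_values_def)
next
  case (Cons p H)
  obtain a b where p: "p = (a, b)" by (cases p)
  have ab: "a \<in> V" "b \<in> V" "polar Q a b = 1" using Cons.prems(1) p by auto
  have H1: "\<forall>k<length H. fst (H!k) \<in> V \<and> snd (H!k) \<in> V \<and> polar Q (fst (H!k)) (snd (H!k)) = 1"
    using Cons.prems(1) by auto
  have orth: "polar Q (pair_vec (p # H) i) (pair_vec (p # H) i') = 0"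
    if "i < 2 * length (p # H)" "i' < 2 * length (p # H)" "i div 2 \<noteq> i' div 2" for i i'
    using Cons.prems(2) that by blast
  have H2: "\<forall>i<2 * length H. \<forall>i'<2 * length H. i div 2 \<noteq> i' div 2 \<longrightarrow>
      polar Q (pair_vec H i) (pair_vec H i') = 0"
    using orth[of "Suc (Suc _)" "Suc (Suc _)"] p by auto
  have vecs: "\<And>i. i < 2 * length H \<Longrightarrow> pair_vec H i \<in> V" using H1 unfolding pair_vec_def
    by (metis less_mult_imp_div_less mult.commute)
  define W where "W = lincomb {..<2 * length H} (\<lambda>i. c (Suc (Suc i))) (pair_vec H)"
  have WV: "W \<in> V" unfolding W_def by (rule lincomb_vecs) (use vecs in auto)
  have "polar Q a W = 0" "polar Q b W = 0"
    unfolding W_def using ab vecs orth[of 0 "Suc (Suc _)"] orth[of 1 "Suc (Suc _)"] p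
    by (auto intro!: polar_lincomb_orthogonal)
  then have "Q (vadd (vscale (c 0) a) (vadd (vscale (c 1) b) W)) = binq (Q a) (Q b) (c 0) (c 1) + Q W"
    using Q_dual_pair_orthogonal ab WV by blast
  moreover have "Q W = sum_binQ (pair_values Q H) (\<lambda>i. c (Suc (Suc i)))"
    unfolding W_def using Cons.IH[OF H1 H2] .
  ultimately show ?case unfolding p lincomb_pair_vec_Cons W_def[symmetric]
    by (simp add: sum_binQ_Cons pair_values_def)
qed

end

context compatible_norm begin

lemma splitting_basis_exists:
  obtains e where "splitting {..<n} e" "span {..<n} e = V"
proof -
  obtain e :: "nat \<Rightarrow> nat \<Rightarrow> 'a" where e1: "\<forall>i<n. e i \<in> V"
    and e2: "bij_betw (\<lambda>c j. \<Sum>i<n. c i * e i j) V V"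
    and e3: "\<forall>c\<in>V. c \<noteq> vzero \<longrightarrow> \<alpha> (\<lambda>j. \<Sum>i<n. c i * e i j) = Min {v (c i) + \<alpha> (e i) |i. i < n \<and> c i \<noteq> 0}"
    using vnorm_alpha unfolding vnorm_def by blast
  have lce: "(\<lambda>j. \<Sum>i<n. c i * e i j) = lincomb {..<n} c e" for c unfolding lincomb_def by simp
  have bij: "bij_betw (\<lambda>c. lincomb {..<n} c e) V V" using e2 unfolding lce .
  have sp: "splitting {..<n} e"
    unfolding splitting_def
  proof (intro conjI allI impI ballI)
    show "finite {..<n}" by simp
    show "\<And>i. i \<in> {..<n} \<Longrightarrow> e i \<in> V" using e1 by auto
    fix c :: "nat \<Rightarrow> 'a" assume c: "\<exists>i\<in>{..<n}. c i \<noteq> 0"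
    define c0 where "c0 = restr n c"
    have c0V: "c0 \<in> V" unfolding c0_def by (rule restr_vecs)
    have c0n: "c0 \<noteq> vzero" using c unfolding c0_def restr_def by (auto simp: fun_eq_iff)
    have eq: "lincomb {..<n} c e = lincomb {..<n} c0 e" by (rule lincomb_cong) (simp add: c0_def restr_def)
    have "lincomb {..<n} c0 e \<noteq> lincomb {..<n} vzero e"
      using bij c0V zero_vecs c0n unfolding bij_betw_def inj_on_def by blast
    then show "lincomb {..<n} c e \<noteq> vzero" unfolding eq by (simp add: lincomb_def)
    fix i assume i: "i \<in> {..<n}" "c i \<noteq> 0"
    have "\<alpha> (lincomb {..<n} c0 e) = Min {v (c0 i) + \<alpha> (e i) |i. i < n \<and> c0 i \<noteq> 0}"
      using e3 c0V c0n unfolding lce by blast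
    also have "\<dots> \<le> v (c0 i) + \<alpha> (e i)" by (rule Min_le) (use i in \<open>auto simp: c0_def restr_def\<close>)
    finally show "\<alpha> (lincomb {..<n} c e) \<le> v (c i) + \<alpha> (e i)" unfolding eq using i
      by (simp add: c0_def restr_def)
  qed
  moreover have "span {..<n} e = V"
  proof
    show "span {..<n} e \<subseteq> V" using span_vecs[OF sp] by blast
    show "V \<subseteq> span {..<n} e"
    proof
      fix z :: "nat \<Rightarrow> 'a" assume "z \<in> V"
      then obtain c where "z = lincomb {..<n} c e" using bij unfolding bij_betw_def by blast
      then show "z \<in> span {..<n} e" using lincomb_in_span by simp
    qed
  qed
  ultimately show thesis by (rule that)
qed

lemma gen_cond_pair_values:
  assumes "hyperbolic_basis H I g"
  shows "\<forall>(a, b)\<in>set (pair_values Q H). gen_cond v \<gamma> a b"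
proof
  fix p assume "p \<in> set (pair_values Q H)"
  then obtain i where "i < length H" "p = (Q (fst (H!i)), Q (snd (H!i)))"
    unfolding pair_values_def by (auto simp: in_set_conv_nth)
  then show "case p of (a, b) \<Rightarrow> gen_cond v \<gamma> a b" using assms unfolding hyperbolic_basis_def by simp
qed

end

context qform begin

text \<open>A vector in the kernel of F lies in the radical of R.\<close>

lemma inj_on_of_nonsingular_pullback:
  assumes ns: "nonsingular (m, R)" and FV: "\<And>c. F c \<in> V"
    and add: "\<And>c c'. F (vadd c c') = vadd (F c) (F c')"
    and scale: "\<And>a c. F (vscale a c) = vscale a (F c)"
    and QF: "\<And>c. Q (F c) = R c"
  shows "inj_on F (vecs m)"
proof (rule inj_onI)
  fix c c' assume c: "c \<in> vecs m" "c' \<in> vecs m" "F c = F c'"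
  define d where "d = vadd c (vscale (-1) c')"
  have "F d = vzero" using c(3) unfolding d_def add scale by (simp add: vadd_def vscale_def)
  then have "polar R d y = 0" for y
    using polar_zero_left[OF FV] unfolding polar_def QF[symmetric] add by simp
  moreover have "d \<in> vecs m" using c unfolding d_def by blast
  ultimately have "d = vzero" using ns unfolding nonsingular_def by auto
  then show "c = c'" by (simp add: d_def vadd_def vscale_def fun_eq_iff)
qed

end

context compatible_norm begin

lemma isometric_of_hyperbolic_basis:
  assumes H: "hyperbolic_basis H {..<n} e" and spanV: "span {..<n} e = V"
  shows "isometric (sum_binf (pair_values Q H)) (n, Q)"
proof -
  define L where "L = pair_values Q H"
  define F where "F c = lincomb {..<2 * length H} c (pair_vec H)" for c
  have G1: "\<forall>k<length H. fst (H!k) \<in> V \<and> snd (H!k) \<in> V \<and> polar Q (fst (H!k)) (snd (H!k)) = 1"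
    and G2: "\<forall>i<2 * length H. \<forall>i'<2 * length H. i div 2 \<noteq> i' div 2 \<longrightarrow>
      polar Q (pair_vec H i) (pair_vec H i') = 0"
    and G4: "span {..<n} e \<subseteq> span {..<2 * length H} (pair_vec H)"
    and G5: "2 * length H = n"
    using H unfolding hyperbolic_basis_def by auto
  have len: "2 * length L = 2 * length H" by (simp add: L_def pair_values_def)
  have FV: "F c \<in> V" for c
    unfolding F_def using G1 by (intro lincomb_vecs) (auto simp: pair_vec_def)
  have add: "F (vadd c c') = vadd (F c) (F c')" for c c'
    unfolding F_def lincomb_def vadd_def by (simp add: fun_eq_iff sum.distrib algebra_simps)
  have scale: "F (vscale a c) = vscale a (F c)" for a c
    unfolding F_def lincomb_def vscale_def by (simp add: fun_eq_iff sum_distrib_left algebra_simps)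
  have QF: "Q (F c) = sum_binQ L c" for c
    unfolding F_def L_def by (rule Q_lincomb_pair_vec) (use G1 G2 in auto)
  have "nonsingular (2 * length L, sum_binQ L)"
    using nonsingular_sum_binf_of_gen_cond[OF gen_cond_pair_values[OF H]]
    by (simp add: sum_binf_eq_sum_binQ L_def)
  then have "inj_on F (vecs (2 * length H))"
    using inj_on_of_nonsingular_pullback[OF _ FV add scale QF] len by simp
  moreover have "V \<subseteq> F ` vecs (2 * length H)"
  proof
    fix z :: "nat \<Rightarrow> 'a" assume "z \<in> V"
    then obtain c where c: "z = lincomb {..<2 * length H} c (pair_vec H)"
      using G4 spanV unfolding span_def by blast
    have "z = F (restr (2 * length H) c)" unfolding c F_def by (rule lincomb_cong) (simp add: restr_def)
    then show "z \<in> F ` vecs (2 * length H)" using restr_vecs by blast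
  qed
  ultimately have "bij_betw F (vecs (2 * length H)) V"
    unfolding bij_betw_def using FV by blast
  then show ?thesis
    unfolding L_def[symmetric] sum_binf_eq_sum_binQ isometric_pair_iff len G5
    using add scale QF by (intro exI[of _ F]) simp
qed

lemma isometric_sum_binf_of_depth_attained:
  assumes "\<forall>x\<in>V. x \<noteq> vzero \<longrightarrow> (\<exists>y\<in>V. y \<noteq> vzero \<and> polar Q x y \<noteq> 0 \<and> v (polar Q x y) = \<alpha> x + \<alpha> y + \<gamma>)"
  shows "\<exists>L. (\<forall>(a, b)\<in>set L. gen_cond v \<gamma> a b) \<and> isometric (n, Q) (sum_binf L)"
proof -
  obtain e where sp: "splitting {..<n} e" and spanV: "span {..<n} e = V"
    by (rule splitting_basis_exists)
  have "depth_attained {..<n} e" unfolding depth_attained_def spanV using assms by blast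
  then obtain H where H: "hyperbolic_basis H {..<n} e" using hyperbolic_basis_exists[OF sp] by blast
  then show ?thesis
    using gen_cond_pair_values[OF H] isometric_sym[OF isometric_of_hyperbolic_basis[OF H spanV]] by blast
qed

end

lemma gen_cond_mono: "gen_cond v \<gamma> a b \<Longrightarrow> \<gamma> \<le> \<epsilon> \<Longrightarrow> gen_cond v \<epsilon> a b"
  unfolding gen_cond_def by (meson add_mono neg_le_iff_le order_trans)

lemma isometric_sum_binf_of_compatible:
  fixes v :: "'a::field \<Rightarrow> 'g::linordered_ab_group_add"
  assumes "valuation v" "(2::'a) = 0 \<or> \<gamma> < v 2" "nonsingular (n, Q)"
    and "compatible v (n, Q) \<alpha> \<gamma>"
  shows "\<exists>L. (\<forall>(a, b)\<in>set L. gen_cond v \<gamma> a b) \<and> isometric (n, Q) (sum_binf L)"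
proof -
  interpret compatible_norm v \<gamma> n Q \<alpha>
    using assms unfolding compatible_def nonsingular_def by unfold_locales auto
  show ?thesis
    by (rule isometric_sum_binf_of_depth_attained) (use assms(4) in \<open>auto simp: compatible_def\<close>)
qed

lemma in_generated_if_in_W_eps:
  fixes v :: "'a::field \<Rightarrow> 'g::linordered_ab_group_add"
  assumes "valuation v" "(2::'a) = 0 \<or> \<epsilon> < v 2" "in_W_eps v \<epsilon> S"
  shows "in_generated v \<epsilon> S"
proof -
  obtain n Q \<alpha> \<gamma> where T: "nonsingular (n, Q)" "witt_equiv S (n, Q)" "\<gamma> \<le> \<epsilon>" "compatible v (n, Q) \<alpha> \<gamma>"
    using assms(3) unfolding in_W_eps_def by auto
  have "(2::'a) = 0 \<or> \<gamma> < v 2" using assms(2) T(3) by auto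
  then obtain L where L: "\<forall>(a, b)\<in>set L. gen_cond v \<gamma> a b" "isometric (n, Q) (sum_binf L)"
    using isometric_sum_binf_of_compatible[OF assms(1) _ T(1,4)] by blast
  obtain k l where kl: "witt_equiv (osum S (sum_binf (zero_pairs k))) (sum_binf (L @ zero_pairs l))"
    using witt_equiv_sum_binf_of_isometric[OF T(2) L(2)] by blast
  have "gen_cond v \<epsilon> a b" if "(a, b) \<in> set L" for a b
    using L(1) that gen_cond_mono T(3) by blast
  then have "\<forall>(a, b)\<in>set (L @ zero_pairs l). gen_cond v \<epsilon> a b"
    by (auto simp: gen_cond_def[of _ _ 0])
  moreover have "\<forall>(a, b)\<in>set (zero_pairs k :: ('a \<times> 'a) list). gen_cond v \<epsilon> a b"
    by (simp add: gen_cond_def)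
  ultimately show ?thesis unfolding in_generated_def using kl by blast
qed

theorem corollary4p4:
  fixes v :: "'a::field \<Rightarrow> 'g::linordered_ab_group_add" and \<epsilon> :: 'g
  assumes "valuation v"
    and "divisible_group (UNIV :: 'g set)"
    and "0 \<le> \<epsilon>"
    and "(2::'a) = 0 \<or> \<epsilon> < v 2"
  shows "(\<forall>a b. gen_cond v \<epsilon> a b \<longrightarrow> nonsingular (binf a b)) \<and>
         (\<forall>S :: 'a qspace. nonsingular S \<longrightarrow> (in_W_eps v \<epsilon> S \<longleftrightarrow> in_generated v \<epsilon> S))"
proof -
  interpret depth v \<epsilon> using assms by unfold_locales auto
  have "nonsingular (binf a b)" if "gen_cond v \<epsilon> a b" for a b
    unfolding binf_sum_binf by (rule nonsingular_sum_binf) (use gen_cond_disc[OF that] in simp)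
  moreover have "in_W_eps v \<epsilon> S \<longleftrightarrow> in_generated v \<epsilon> S" for S :: "'a qspace"
    using in_W_eps_if_in_generated[OF assms(2)] in_generated_if_in_W_eps[OF assms(1,4)] by blast
  ultimately show ?thesis by blast
qed

end
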